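(* Let $R$ be a commutative ring and $F$ a countably presented flat $R$-module. Let $T \subseteq R$ be a multiplicative subset such that $T^{-1}F$ is a projective $T^{-1}R$-module. Then there is a countable multiplicative subset $S \subseteq T$ such that $S^{-1}F$ is a projective $S^{-1}R$-module. *)

theory Defs
  imports "HOL-Algebra.Module" "HOL-Library.Countable_Set"
begin

definition linear_map ::
  "'a ring \<Rightarrow> ('a, 'b) module \<Rightarrow> ('a, 'c) module \<Rightarrow> ('b \<Rightarrow> 'c) \<Rightarrow> bool" where
  "linear_map R M N f \<longleftrightarrow>
     f \<in> carrier M \<rightarrow> carrier N \<and>
     (\<forall>x\<in>carrier M. \<forall>y\<in>carrier M. f (x \<oplus>\<^bsub>M\<^esub> y) = f x \<oplus>\<^bsub>N\<^esub> f y) \<and>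
     (\<forall>a\<in>carrier R. \<forall>x\<in>carrier M. f (a \<odot>\<^bsub>M\<^esub> x) = a \<odot>\<^bsub>N\<^esub> f x)"

text \<open>The free module \<open>A^(I)\<close>: finitely supported functions \<open>I \<rightarrow> A\<close>
  (extended by zero outside \<open>I\<close>).  The multiplicative fields are dummies.\<close>
definition free_module :: "'a ring \<Rightarrow> 'i set \<Rightarrow> ('a, 'i \<Rightarrow> 'a) module" where
  "free_module A I =
     \<lparr> carrier = {f. (\<forall>i\<in>I. f i \<in> carrier A) \<and> (\<forall>i. i \<notin> I \<longrightarrow> f i = \<zero>\<^bsub>A\<^esub>)
                    \<and> finite {i\<in>I. f i \<noteq> \<zero>\<^bsub>A\<^esub>}},
       mult = (\<lambda>f g i. \<zero>\<^bsub>A\<^esub>),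
       one = (\<lambda>i. \<zero>\<^bsub>A\<^esub>),
       zero = (\<lambda>i. \<zero>\<^bsub>A\<^esub>),
       add = (\<lambda>f g i. if i \<in> I then f i \<oplus>\<^bsub>A\<^esub> g i else \<zero>\<^bsub>A\<^esub>),
       smult = (\<lambda>a f i. if i \<in> I then a \<otimes>\<^bsub>A\<^esub> f i else \<zero>\<^bsub>A\<^esub>) \<rparr>"

text \<open>The index set
  is taken inside the carrier of \<open>M\<close> (no loss of generality: any module is a quotient
  of the free module on its own elements).\<close>
definition projective :: "'a ring \<Rightarrow> ('a, 'b) module \<Rightarrow> bool" where
  "projective A M \<longleftrightarrow> module A M \<and>
     (\<exists>I \<subseteq> carrier M. \<exists>s p.
        linear_map A M (free_module A I) s \<and> linear_map A (free_module A I) M p \<and>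
        (\<forall>x\<in>carrier M. p (s x) = x))"

definition generated_by :: "'a ring \<Rightarrow> ('a, 'b) module \<Rightarrow> (nat \<Rightarrow> 'b) \<Rightarrow> bool" where
  "generated_by R M g \<longleftrightarrow> (\<forall>n. g n \<in> carrier M) \<and>
     carrier M = {finsum M (\<lambda>i. c i \<odot>\<^bsub>M\<^esub> g i) {..<k} | c k. \<forall>i. c i \<in> carrier R}"

definition countably_generated :: "'a ring \<Rightarrow> ('a, 'b) module \<Rightarrow> bool" where
  "countably_generated R M \<longleftrightarrow> (\<exists>g. generated_by R M g)"

definition eval_map :: "'a ring \<Rightarrow> ('a, 'b) module \<Rightarrow> (nat \<Rightarrow> 'b) \<Rightarrow> (nat \<Rightarrow> 'a) \<Rightarrow> 'b" where
  "eval_map R M g c = finsum M (\<lambda>i. c i \<odot>\<^bsub>M\<^esub> g i) {i. c i \<noteq> \<zero>\<^bsub>R\<^esub>}"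

definition relation_module :: "'a ring \<Rightarrow> ('a, 'b) module \<Rightarrow> (nat \<Rightarrow> 'b) \<Rightarrow> ('a, nat \<Rightarrow> 'a) module" where
  "relation_module R M g =
     (free_module R (UNIV :: nat set))
       \<lparr> carrier := {c \<in> carrier (free_module R (UNIV :: nat set)). eval_map R M g c = \<zero>\<^bsub>M\<^esub>} \<rparr>"

definition countably_presented :: "'a ring \<Rightarrow> ('a, 'b) module \<Rightarrow> bool" where
  "countably_presented R M \<longleftrightarrow>
     (\<exists>g. generated_by R M g \<and> countably_generated R (relation_module R M g))"

section \<open>Flatness (equational criterion)\<close>

definition flat :: "'a ring \<Rightarrow> ('a, 'b) module \<Rightarrow> bool" where
  "flat R M \<longleftrightarrow> module R M \<and>
     (\<forall>n (r :: nat \<Rightarrow> 'a) (x :: nat \<Rightarrow> 'b).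
        (\<forall>i<n. r i \<in> carrier R \<and> x i \<in> carrier M) \<and>
        finsum M (\<lambda>i. r i \<odot>\<^bsub>M\<^esub> x i) {..<n} = \<zero>\<^bsub>M\<^esub> \<longrightarrow>
        (\<exists>m (a :: nat \<Rightarrow> nat \<Rightarrow> 'a) (y :: nat \<Rightarrow> 'b).
           (\<forall>j<m. y j \<in> carrier M) \<and> (\<forall>i<n. \<forall>j<m. a i j \<in> carrier R) \<and>
           (\<forall>i<n. x i = finsum M (\<lambda>j. a i j \<odot>\<^bsub>M\<^esub> y j) {..<m}) \<and>
           (\<forall>j<m. finsum R (\<lambda>i. r i \<otimes>\<^bsub>R\<^esub> a i j) {..<n} = \<zero>\<^bsub>R\<^esub>)))"

definition mult_subset :: "'a ring \<Rightarrow> 'a set \<Rightarrow> bool" where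
  "mult_subset R S \<longleftrightarrow> S \<subseteq> carrier R \<and> \<one>\<^bsub>R\<^esub> \<in> S \<and>
     (\<forall>s\<in>S. \<forall>t\<in>S. s \<otimes>\<^bsub>R\<^esub> t \<in> S)"

definition ring_as_module :: "'a ring \<Rightarrow> ('a, 'a) module" where
  "ring_as_module R = \<lparr> carrier = carrier R, mult = mult R, one = one R,
                         zero = zero R, add = add R, smult = mult R \<rparr>"

definition loc_cls :: "'a ring \<Rightarrow> 'a set \<Rightarrow> ('a, 'b) module \<Rightarrow> 'b \<Rightarrow> 'a \<Rightarrow> ('b \<times> 'a) set" where
  "loc_cls R S M x s = {(y, t). y \<in> carrier M \<and> t \<in> S \<and>
     (\<exists>u\<in>S. u \<odot>\<^bsub>M\<^esub> ((t \<odot>\<^bsub>M\<^esub> x) \<ominus>\<^bsub>M\<^esub> (s \<odot>\<^bsub>M\<^esub> y)) = \<zero>\<^bsub>M\<^esub>)}"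

definition loc_rep :: "('b \<times> 'a) set \<Rightarrow> 'b \<times> 'a" where
  "loc_rep X = (SOME p. p \<in> X)"

definition loc_ring :: "'a ring \<Rightarrow> 'a set \<Rightarrow> ('a \<times> 'a) set ring" where
  "loc_ring R S =
    (let cls = loc_cls R S (ring_as_module R) in
     \<lparr> carrier = {cls a s | a s. a \<in> carrier R \<and> s \<in> S},
       mult = (\<lambda>X Y. cls (fst (loc_rep X) \<otimes>\<^bsub>R\<^esub> fst (loc_rep Y))
                          (snd (loc_rep X) \<otimes>\<^bsub>R\<^esub> snd (loc_rep Y))),
       one = cls \<one>\<^bsub>R\<^esub> \<one>\<^bsub>R\<^esub>,
       zero = cls \<zero>\<^bsub>R\<^esub> \<one>\<^bsub>R\<^esub>,
       add = (\<lambda>X Y. cls ((snd (loc_rep Y) \<otimes>\<^bsub>R\<^esub> fst (loc_rep X)) \<oplus>\<^bsub>R\<^esub>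
                          (snd (loc_rep X) \<otimes>\<^bsub>R\<^esub> fst (loc_rep Y)))
                         (snd (loc_rep X) \<otimes>\<^bsub>R\<^esub> snd (loc_rep Y))) \<rparr>)"

text \<open>The localized module \<open>S^{-1}M\<close>, a module over \<open>loc_ring R S\<close>.
  The multiplicative fields are dummies (irrelevant for modules).\<close>
definition loc_module ::
  "'a ring \<Rightarrow> 'a set \<Rightarrow> ('a, 'b) module \<Rightarrow> (('a \<times> 'a) set, ('b \<times> 'a) set) module" where
  "loc_module R S M =
    (let cls = loc_cls R S M in
     \<lparr> carrier = {cls x s | x s. x \<in> carrier M \<and> s \<in> S},
       mult = (\<lambda>X Y. cls \<zero>\<^bsub>M\<^esub> \<one>\<^bsub>R\<^esub>),
       one = cls \<zero>\<^bsub>M\<^esub> \<one>\<^bsub>R\<^esub>,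
       zero = cls \<zero>\<^bsub>M\<^esub> \<one>\<^bsub>R\<^esub>,
       add = (\<lambda>X Y. cls ((snd (loc_rep Y) \<odot>\<^bsub>M\<^esub> fst (loc_rep X)) \<oplus>\<^bsub>M\<^esub>
                          (snd (loc_rep X) \<odot>\<^bsub>M\<^esub> fst (loc_rep Y)))
                         (snd (loc_rep X) \<otimes>\<^bsub>R\<^esub> snd (loc_rep Y))),
       smult = (\<lambda>A X. cls (fst (loc_rep A) \<odot>\<^bsub>M\<^esub> fst (loc_rep X))
                          (snd (loc_rep A) \<otimes>\<^bsub>R\<^esub> snd (loc_rep X))) \<rparr>)"

end

theory Submission
  imports Defs
begin

text \<open>Choose countably many generators \<open>g\<^sub>n\<close> of \<open>F\<close> whose module of relations is generated by
  countably many relations \<open>kg\<^sub>j\<close>.  Over \<open>S\<inverse>R\<close>, a \<^emph>\<open>splitting\<close> is a family of fractions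
  \<open>a\<^sub>n\<^sub>m / d\<^sub>n\<^sub>m\<close> such that \<open>g\<^sub>n/1 \<mapsto> \<Sum>\<^sub>m (a\<^sub>n\<^sub>m / d\<^sub>n\<^sub>m) e\<^sub>m\<close>, with \<open>e\<^sub>m\<close> the basis vector at
  \<open>g\<^sub>m/1\<close> of the free module on \<open>S\<inverse>F\<close>, kills the relations and is a right inverse of the canonical
  projection on the generators; it then extends to a section, so \<open>S\<inverse>F\<close> is projective.
  Conversely, a section witnessing projectivity of \<open>T\<inverse>F\<close> yields a splitting over \<open>T\<close>.
  A splitting consists of countably many fractions subject to countably many equations, each of
  which holds in the localization at \<open>T\<close> because of a single element of \<open>T\<close>.  The multiplicative
  set \<open>S \<subseteq> T\<close> generated by the denominators and these witnesses is countable, and the same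
  splitting works over \<open>S\<close>.\<close>

section \<open>Localization\<close>

lemma abelian_group_cong:
  assumes G: "abelian_group G"
    and H: "carrier H = carrier G" "add H = add G" "zero H = zero G"
  shows "abelian_group H"
proof -
  interpret abelian_group G by (rule G)
  show ?thesis
  proof (rule abelian_groupI)
    fix x assume "x \<in> carrier H"
    then show "\<exists>y\<in>carrier H. y \<oplus>\<^bsub>H\<^esub> x = \<zero>\<^bsub>H\<^esub>"
      using H by (intro bexI[of _ "\<ominus>\<^bsub>G\<^esub> x"]) (simp_all add: l_neg)
  qed (simp_all add: H a_ac)
qed

lemma finsum_cong_struct:
  assumes "carrier G = carrier H" "add G = add H" "zero G = zero H"
  shows "finsum G = finsum H"
proof (intro ext)
  fix f A show "finsum G f A = finsum H f A"
    by (simp add: finsum_def finprod_def assms)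
qed

lemma ring_as_module_simps [simp]:
  "carrier (ring_as_module R) = carrier R"
  "smult (ring_as_module R) = mult R"
  "add (ring_as_module R) = add R"
  "zero (ring_as_module R) = zero R"
  "mult (ring_as_module R) = mult R"
  "one (ring_as_module R) = one R"
  by (simp_all add: ring_as_module_def)

lemma ring_as_module_module:
  assumes "cring R" shows "module R (ring_as_module R)"
proof -
  interpret cring R by fact
  have "abelian_group (ring_as_module R)"
    by (rule abelian_group_cong[OF abelian_group_axioms]) simp_all
  then show ?thesis
    by (rule moduleI[OF assms]) (simp_all add: l_distr r_distr m_assoc)
qed

locale localization =
  fixes R :: "'a ring" (structure) and S :: "'a set" and M :: "('a, 'b) module"
  assumes M: "module R M" and S: "mult_subset R S"
begin

sublocale module R M by (rule M)

lemma S_car: "s \<in> S \<Longrightarrow> s \<in> carrier R" using S unfolding mult_subset_def by auto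
lemma one_S: "\<one> \<in> S" using S unfolding mult_subset_def by auto
lemma S_mult: "s \<in> S \<Longrightarrow> t \<in> S \<Longrightarrow> s \<otimes> t \<in> S"
  using S unfolding mult_subset_def by auto

abbreviation "cls \<equiv> loc_cls R S M"
abbreviation "LM \<equiv> loc_module R S M"

definition rel where "rel x s y t \<longleftrightarrow> (\<exists>u\<in>S. (u \<otimes> t) \<odot>\<^bsub>M\<^esub> x = (u \<otimes> s) \<odot>\<^bsub>M\<^esub> y)"

lemma smult_eq_rescale:
  assumes "a \<odot>\<^bsub>M\<^esub> x = b \<odot>\<^bsub>M\<^esub> y" "a \<in> carrier R" "b \<in> carrier R" "c \<in> carrier R"
    "x \<in> carrier M" "y \<in> carrier M" "p = c \<otimes> a" "q = c \<otimes> b"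
  shows "p \<odot>\<^bsub>M\<^esub> x = q \<odot>\<^bsub>M\<^esub> y"
proof -
  have "p \<odot>\<^bsub>M\<^esub> x = c \<odot>\<^bsub>M\<^esub> (a \<odot>\<^bsub>M\<^esub> x)" using assms(2,4,5,7) smult_assoc1 by simp
  also have "\<dots> = c \<odot>\<^bsub>M\<^esub> (b \<odot>\<^bsub>M\<^esub> y)" using assms(1) by simp
  also have "\<dots> = q \<odot>\<^bsub>M\<^esub> y" using assms(3,4,6,8) smult_assoc1 by simp
  finally show ?thesis .
qed

lemma M_minus_eq_zero_iff: "a \<in> carrier M \<Longrightarrow> b \<in> carrier M \<Longrightarrow> (a \<ominus>\<^bsub>M\<^esub> b = \<zero>\<^bsub>M\<^esub>) = (a = b)"
  by (metis a_minus_def M.add.inv_closed M.minus_equality M.r_neg)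

lemma loc_cls_condition_iff:
  assumes "u \<in> S" "s \<in> S" "t \<in> S" "x \<in> carrier M" "y \<in> carrier M"
  shows "(u \<odot>\<^bsub>M\<^esub> ((t \<odot>\<^bsub>M\<^esub> x) \<ominus>\<^bsub>M\<^esub> (s \<odot>\<^bsub>M\<^esub> y)) = \<zero>\<^bsub>M\<^esub>)
     = ((u \<otimes> t) \<odot>\<^bsub>M\<^esub> x = (u \<otimes> s) \<odot>\<^bsub>M\<^esub> y)"
proof -
  have c: "u \<in> carrier R" "s \<in> carrier R" "t \<in> carrier R" using assms S_car by auto
  have "u \<odot>\<^bsub>M\<^esub> ((t \<odot>\<^bsub>M\<^esub> x) \<ominus>\<^bsub>M\<^esub> (s \<odot>\<^bsub>M\<^esub> y)) = (u \<otimes> t) \<odot>\<^bsub>M\<^esub> x \<ominus>\<^bsub>M\<^esub> (u \<otimes> s) \<odot>\<^bsub>M\<^esub> y"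
    using c assms(4,5) by (simp add: M.minus_eq smult_r_distr smult_r_minus smult_assoc1)
  then show ?thesis using c assms(4,5) by (simp add: M_minus_eq_zero_iff)
qed

lemma loc_cls_rel:
  assumes "x \<in> carrier M" "s \<in> S"
  shows "cls x s = {(y, t). y \<in> carrier M \<and> t \<in> S \<and> rel x s y t}"
  unfolding loc_cls_def rel_def
proof (rule Collect_cong)
  fix p :: "'b \<times> 'a"
  obtain y t where p: "p = (y, t)" by (cases p)
  have "\<And>u. y \<in> carrier M \<Longrightarrow> t \<in> S \<Longrightarrow> u \<in> S \<Longrightarrow>
      (u \<odot>\<^bsub>M\<^esub> ((t \<odot>\<^bsub>M\<^esub> x) \<ominus>\<^bsub>M\<^esub> (s \<odot>\<^bsub>M\<^esub> y)) = \<zero>\<^bsub>M\<^esub>)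
     = ((u \<otimes> t) \<odot>\<^bsub>M\<^esub> x = (u \<otimes> s) \<odot>\<^bsub>M\<^esub> y)"
    using loc_cls_condition_iff assms by blast
  then show "(case p of (y, t) \<Rightarrow> y \<in> carrier M \<and> t \<in> S \<and>
     (\<exists>u\<in>S. u \<odot>\<^bsub>M\<^esub> ((t \<odot>\<^bsub>M\<^esub> x) \<ominus>\<^bsub>M\<^esub> (s \<odot>\<^bsub>M\<^esub> y)) = \<zero>\<^bsub>M\<^esub>)) =
    (case p of (y, t) \<Rightarrow> y \<in> carrier M \<and> t \<in> S \<and> (\<exists>u\<in>S. (u \<otimes> t) \<odot>\<^bsub>M\<^esub> x = (u \<otimes> s) \<odot>\<^bsub>M\<^esub> y))"
    unfolding p prod.case by blast
qed

lemma rel_refl: "rel x s x s"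
  unfolding rel_def using one_S by blast

lemma rel_sym: "rel x s y t \<Longrightarrow> rel y t x s"
  unfolding rel_def by (elim bexE) (rule bexI, rule sym, assumption+)

lemma rel_trans:
  assumes "rel x s y t" "rel y t z r" "x \<in> carrier M" "y \<in> carrier M" "z \<in> carrier M"
    "s \<in> S" "t \<in> S" "r \<in> S"
  shows "rel x s z r"
proof -
  obtain u where u: "u \<in> S" "(u \<otimes> t) \<odot>\<^bsub>M\<^esub> x = (u \<otimes> s) \<odot>\<^bsub>M\<^esub> y" using assms(1) rel_def by auto
  obtain v where v: "v \<in> S" "(v \<otimes> r) \<odot>\<^bsub>M\<^esub> y = (v \<otimes> t) \<odot>\<^bsub>M\<^esub> z" using assms(2) rel_def by auto
  have c: "u \<in> carrier R" "v \<in> carrier R" "s \<in> carrier R" "t \<in> carrier R" "r \<in> carrier R"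
    using u(1) v(1) assms(6-8) S_car by auto
  note xyz = assms(3-5)
  have "((u \<otimes> v \<otimes> t) \<otimes> r) \<odot>\<^bsub>M\<^esub> x = ((u \<otimes> v \<otimes> r) \<otimes> s) \<odot>\<^bsub>M\<^esub> y"
    by (rule smult_eq_rescale[OF u(2) _ _ _ xyz(1,2), of "v \<otimes> r"]) (use c in \<open>simp_all add: m_ac\<close>)
  also have "\<dots> = ((u \<otimes> v \<otimes> t) \<otimes> s) \<odot>\<^bsub>M\<^esub> z"
    by (rule smult_eq_rescale[OF v(2) _ _ _ xyz(2,3), of "u \<otimes> s"]) (use c in \<open>simp_all add: m_ac\<close>)
  finally have fin: "((u \<otimes> v \<otimes> t) \<otimes> r) \<odot>\<^bsub>M\<^esub> x = ((u \<otimes> v \<otimes> t) \<otimes> s) \<odot>\<^bsub>M\<^esub> z" .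
  have "u \<otimes> v \<otimes> t \<in> S" using u(1) v(1) assms(7) S_mult by blast
  then show ?thesis unfolding rel_def using fin by blast
qed

lemma cls_eq_iff:
  assumes "x \<in> carrier M" "y \<in> carrier M" "s \<in> S" "t \<in> S"
  shows "(cls x s = cls y t) = rel x s y t"
proof
  assume "cls x s = cls y t"
  moreover have "(x, s) \<in> cls x s" using assms rel_refl loc_cls_rel by auto
  ultimately have "rel y t x s" using assms loc_cls_rel by auto
  then show "rel x s y t" by (rule rel_sym)
next
  assume r: "rel x s y t"
  show "cls x s = cls y t"
  proof (intro Set.set_eqI iffI)
    fix p assume "p \<in> cls x s"
    then obtain z r' where p: "p = (z, r')" "z \<in> carrier M" "r' \<in> S" "rel x s z r'"
      using loc_cls_rel[OF assms(1,3)] by auto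
    have "rel y t z r'" using rel_trans[OF rel_sym[OF r] p(4)] p(2,3) assms by blast
    then show "p \<in> cls y t" using p loc_cls_rel[OF assms(2,4)] by auto
  next
    fix p assume "p \<in> cls y t"
    then obtain z r' where p: "p = (z, r')" "z \<in> carrier M" "r' \<in> S" "rel y t z r'"
      using loc_cls_rel[OF assms(2,4)] by auto
    have "rel x s z r'" using rel_trans[OF r p(4)] p(2,3) assms by blast
    then show "p \<in> cls x s" using p loc_cls_rel[OF assms(1,3)] by auto
  qed
qed

lemma cls_eqI:
  assumes "x \<in> carrier M" "y \<in> carrier M" "s \<in> S" "t \<in> S" "t \<odot>\<^bsub>M\<^esub> x = s \<odot>\<^bsub>M\<^esub> y"
  shows "cls x s = cls y t"
proof -
  have "(\<one> \<otimes> t) \<odot>\<^bsub>M\<^esub> x = (\<one> \<otimes> s) \<odot>\<^bsub>M\<^esub> y" using assms S_car by simp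
  then show ?thesis unfolding cls_eq_iff[OF assms(1-4)] rel_def using one_S by blast
qed

lemma cls_eqD:
  assumes "x \<in> carrier M" "y \<in> carrier M" "s \<in> S" "t \<in> S" "cls x s = cls y t"
  obtains u where "u \<in> S" "(u \<otimes> t) \<odot>\<^bsub>M\<^esub> x = (u \<otimes> s) \<odot>\<^bsub>M\<^esub> y"
  using assms cls_eq_iff rel_def by blast

lemma loc_rep_cls:
  assumes "x \<in> carrier M" "s \<in> S"
  shows "fst (loc_rep (cls x s)) \<in> carrier M" "snd (loc_rep (cls x s)) \<in> S"
    "cls (fst (loc_rep (cls x s))) (snd (loc_rep (cls x s))) = cls x s"
proof -
  have "(x, s) \<in> cls x s" using assms rel_refl loc_cls_rel by auto
  then have "loc_rep (cls x s) \<in> cls x s" unfolding loc_rep_def by (rule someI)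
  then obtain y t where yt: "loc_rep (cls x s) = (y, t)" "y \<in> carrier M" "t \<in> S" "rel x s y t"
    using loc_cls_rel[OF assms] by auto
  then show "fst (loc_rep (cls x s)) \<in> carrier M" "snd (loc_rep (cls x s)) \<in> S" by auto
  have "cls y t = cls x s" using yt(2,3,4) assms cls_eq_iff rel_sym by blast
  then show "cls (fst (loc_rep (cls x s))) (snd (loc_rep (cls x s))) = cls x s"
    using yt(1) by simp
qed

lemma LM_carrier: "carrier LM = {cls x s | x s. x \<in> carrier M \<and> s \<in> S}"
  unfolding loc_module_def Let_def by simp

lemma LM_zero: "\<zero>\<^bsub>LM\<^esub> = cls \<zero>\<^bsub>M\<^esub> \<one>"
  unfolding loc_module_def Let_def by simp

lemma cls_in: "x \<in> carrier M \<Longrightarrow> s \<in> S \<Longrightarrow> cls x s \<in> carrier LM"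
  unfolding LM_carrier by blast

lemma LM_cases:
  assumes "X \<in> carrier LM" obtains x s where "x \<in> carrier M" "s \<in> S" "X = cls x s"
  using assms unfolding LM_carrier by blast

lemma cls_add_well_defined:
  assumes "x \<in> carrier M" "y \<in> carrier M" "x' \<in> carrier M" "y' \<in> carrier M"
    "s \<in> S" "t \<in> S" "s' \<in> S" "t' \<in> S" "cls x' s' = cls x s" "cls y' t' = cls y t"
  shows "cls ((t' \<odot>\<^bsub>M\<^esub> x') \<oplus>\<^bsub>M\<^esub> (s' \<odot>\<^bsub>M\<^esub> y')) (s' \<otimes> t') =
         cls ((t \<odot>\<^bsub>M\<^esub> x) \<oplus>\<^bsub>M\<^esub> (s \<odot>\<^bsub>M\<^esub> y)) (s \<otimes> t)"
proof -
  obtain u where u: "u \<in> S" "(u \<otimes> s) \<odot>\<^bsub>M\<^esub> x' = (u \<otimes> s') \<odot>\<^bsub>M\<^esub> x"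
    using cls_eqD[OF assms(3,1,7,5,9)] .
  obtain v where v: "v \<in> S" "(v \<otimes> t) \<odot>\<^bsub>M\<^esub> y' = (v \<otimes> t') \<odot>\<^bsub>M\<^esub> y"
    using cls_eqD[OF assms(4,2,8,6,10)] .
  have c: "u \<in> carrier R" "v \<in> carrier R" "s \<in> carrier R" "t \<in> carrier R" "s' \<in> carrier R" "t' \<in> carrier R"
    using u(1) v(1) assms(5-8) S_car by auto
  note xy = assms(1-4)
  have e1: "((u \<otimes> v) \<otimes> (s \<otimes> t) \<otimes> t') \<odot>\<^bsub>M\<^esub> x' = ((u \<otimes> v) \<otimes> (s' \<otimes> t') \<otimes> t) \<odot>\<^bsub>M\<^esub> x"
    by (rule smult_eq_rescale[OF u(2) _ _ _ xy(3,1), of "v \<otimes> t \<otimes> t'"]) (use c in \<open>simp_all add: m_ac\<close>)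
  have e2: "((u \<otimes> v) \<otimes> (s \<otimes> t) \<otimes> s') \<odot>\<^bsub>M\<^esub> y' = ((u \<otimes> v) \<otimes> (s' \<otimes> t') \<otimes> s) \<odot>\<^bsub>M\<^esub> y"
    by (rule smult_eq_rescale[OF v(2) _ _ _ xy(4,2), of "u \<otimes> s \<otimes> s'"]) (use c in \<open>simp_all add: m_ac\<close>)
  have "((u \<otimes> v) \<otimes> (s \<otimes> t)) \<odot>\<^bsub>M\<^esub> ((t' \<odot>\<^bsub>M\<^esub> x') \<oplus>\<^bsub>M\<^esub> (s' \<odot>\<^bsub>M\<^esub> y'))
      = ((u \<otimes> v) \<otimes> (s \<otimes> t) \<otimes> t') \<odot>\<^bsub>M\<^esub> x' \<oplus>\<^bsub>M\<^esub> ((u \<otimes> v) \<otimes> (s \<otimes> t) \<otimes> s') \<odot>\<^bsub>M\<^esub> y'"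
    using c xy by (simp add: smult_r_distr smult_assoc1)
  also have "\<dots> = ((u \<otimes> v) \<otimes> (s' \<otimes> t') \<otimes> t) \<odot>\<^bsub>M\<^esub> x \<oplus>\<^bsub>M\<^esub> ((u \<otimes> v) \<otimes> (s' \<otimes> t') \<otimes> s) \<odot>\<^bsub>M\<^esub> y"
    by (simp only: e1 e2)
  also have "\<dots> = ((u \<otimes> v) \<otimes> (s' \<otimes> t')) \<odot>\<^bsub>M\<^esub> ((t \<odot>\<^bsub>M\<^esub> x) \<oplus>\<^bsub>M\<^esub> (s \<odot>\<^bsub>M\<^esub> y))"
    using c xy by (simp add: smult_r_distr smult_assoc1)
  finally have fin: "((u \<otimes> v) \<otimes> (s \<otimes> t)) \<odot>\<^bsub>M\<^esub> ((t' \<odot>\<^bsub>M\<^esub> x') \<oplus>\<^bsub>M\<^esub> (s' \<odot>\<^bsub>M\<^esub> y'))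
      = ((u \<otimes> v) \<otimes> (s' \<otimes> t')) \<odot>\<^bsub>M\<^esub> ((t \<odot>\<^bsub>M\<^esub> x) \<oplus>\<^bsub>M\<^esub> (s \<odot>\<^bsub>M\<^esub> y))" .
  have uv: "u \<otimes> v \<in> S" using u(1) v(1) S_mult by blast
  have "rel ((t' \<odot>\<^bsub>M\<^esub> x') \<oplus>\<^bsub>M\<^esub> (s' \<odot>\<^bsub>M\<^esub> y')) (s' \<otimes> t') ((t \<odot>\<^bsub>M\<^esub> x) \<oplus>\<^bsub>M\<^esub> (s \<odot>\<^bsub>M\<^esub> y)) (s \<otimes> t)"
    unfolding rel_def using fin uv by blast
  then show ?thesis
    by (subst cls_eq_iff) (use c xy assms(5-8) S_mult in auto)
qed

lemma cls_add:
  assumes "x \<in> carrier M" "y \<in> carrier M" "s \<in> S" "t \<in> S"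
  shows "cls x s \<oplus>\<^bsub>LM\<^esub> cls y t = cls ((t \<odot>\<^bsub>M\<^esub> x) \<oplus>\<^bsub>M\<^esub> (s \<odot>\<^bsub>M\<^esub> y)) (s \<otimes> t)"
proof -
  have "cls x s \<oplus>\<^bsub>LM\<^esub> cls y t = cls ((snd (loc_rep (cls y t)) \<odot>\<^bsub>M\<^esub> fst (loc_rep (cls x s))) \<oplus>\<^bsub>M\<^esub>
                          (snd (loc_rep (cls x s)) \<odot>\<^bsub>M\<^esub> fst (loc_rep (cls y t))))
                         (snd (loc_rep (cls x s)) \<otimes> snd (loc_rep (cls y t)))"
    unfolding loc_module_def Let_def by simp
  also have "\<dots> = cls ((t \<odot>\<^bsub>M\<^esub> x) \<oplus>\<^bsub>M\<^esub> (s \<odot>\<^bsub>M\<^esub> y)) (s \<otimes> t)"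
    by (rule cls_add_well_defined) (use loc_rep_cls[OF assms(1,3)] loc_rep_cls[OF assms(2,4)] assms in auto)
  finally show ?thesis .
qed

lemma ring_localization: "localization R S (ring_as_module R)"
  by (rule localization.intro[OF ring_as_module_module[OF is_cring] S])

abbreviation "clsR \<equiv> loc_cls R S (ring_as_module R)"
abbreviation "RLM \<equiv> loc_module R S (ring_as_module R)"
abbreviation "LR \<equiv> loc_ring R S"

lemma LR_RLM:
  "carrier LR = carrier RLM" "add LR = add RLM" "zero LR = zero RLM" "mult LR = smult RLM"
  unfolding loc_ring_def loc_module_def Let_def by simp_all

lemma LR_one: "\<one>\<^bsub>LR\<^esub> = clsR \<one> \<one>"
  by (simp add: loc_ring_def Let_def)

lemma cls_smult_well_defined:
  assumes "a \<in> carrier R" "a' \<in> carrier R" "x \<in> carrier M" "x' \<in> carrier M"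
    "r \<in> S" "r' \<in> S" "s \<in> S" "s' \<in> S" "clsR a' r' = clsR a r" "cls x' s' = cls x s"
  shows "cls (a' \<odot>\<^bsub>M\<^esub> x') (r' \<otimes> s') = cls (a \<odot>\<^bsub>M\<^esub> x) (r \<otimes> s)"
proof -
  obtain u where u: "u \<in> S" "(u \<otimes> r) \<otimes> a' = (u \<otimes> r') \<otimes> a"
    using localization.cls_eqD[OF ring_localization, of a' a r' r] assms by auto
  obtain v where v: "v \<in> S" "(v \<otimes> s) \<odot>\<^bsub>M\<^esub> x' = (v \<otimes> s') \<odot>\<^bsub>M\<^esub> x"
    using cls_eqD[OF assms(4,3,8,7,10)] .
  have c: "u \<in> carrier R" "v \<in> carrier R" "r \<in> carrier R" "s \<in> carrier R" "r' \<in> carrier R" "s' \<in> carrier R"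
    using u(1) v(1) assms(5-8) S_car by auto
  note ax = assms(1-4)
  have "((u \<otimes> v) \<otimes> (r \<otimes> s)) \<odot>\<^bsub>M\<^esub> (a' \<odot>\<^bsub>M\<^esub> x') = ((u \<otimes> r) \<otimes> a') \<odot>\<^bsub>M\<^esub> ((v \<otimes> s) \<odot>\<^bsub>M\<^esub> x')"
    using c ax by (simp add: smult_assoc1[symmetric] m_ac)
  also have "\<dots> = ((u \<otimes> r') \<otimes> a) \<odot>\<^bsub>M\<^esub> ((v \<otimes> s') \<odot>\<^bsub>M\<^esub> x)" by (simp only: u(2) v(2))
  also have "\<dots> = ((u \<otimes> v) \<otimes> (r' \<otimes> s')) \<odot>\<^bsub>M\<^esub> (a \<odot>\<^bsub>M\<^esub> x)"
    using c ax by (simp add: smult_assoc1[symmetric] m_ac)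
  finally have fin: "((u \<otimes> v) \<otimes> (r \<otimes> s)) \<odot>\<^bsub>M\<^esub> (a' \<odot>\<^bsub>M\<^esub> x') = ((u \<otimes> v) \<otimes> (r' \<otimes> s')) \<odot>\<^bsub>M\<^esub> (a \<odot>\<^bsub>M\<^esub> x)" .
  have uv: "u \<otimes> v \<in> S" using u(1) v(1) S_mult by blast
  have "rel (a' \<odot>\<^bsub>M\<^esub> x') (r' \<otimes> s') (a \<odot>\<^bsub>M\<^esub> x) (r \<otimes> s)"
    unfolding rel_def using fin uv by blast
  then show ?thesis
    by (subst cls_eq_iff) (use c ax assms(5-8) S_mult in auto)
qed

lemma cls_smult:
  assumes "a \<in> carrier R" "x \<in> carrier M" "r \<in> S" "s \<in> S"
  shows "clsR a r \<odot>\<^bsub>LM\<^esub> cls x s = cls (a \<odot>\<^bsub>M\<^esub> x) (r \<otimes> s)"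
proof -
  have "clsR a r \<odot>\<^bsub>LM\<^esub> cls x s = cls (fst (loc_rep (clsR a r)) \<odot>\<^bsub>M\<^esub> fst (loc_rep (cls x s)))
                          (snd (loc_rep (clsR a r)) \<otimes> snd (loc_rep (cls x s)))"
    unfolding loc_module_def Let_def by simp
  also have "\<dots> = cls (a \<odot>\<^bsub>M\<^esub> x) (r \<otimes> s)"
    by (rule cls_smult_well_defined) (use localization.loc_rep_cls[OF ring_localization, of a r] loc_rep_cls[OF assms(2,4)] assms in auto)
  finally show ?thesis .
qed

lemma LR_carrier: "carrier LR = {clsR a s | a s. a \<in> carrier R \<and> s \<in> S}"
  using LR_RLM(1) localization.LM_carrier[OF ring_localization] by simp

lemma LR_cases:
  assumes "A \<in> carrier LR" obtains a r where "a \<in> carrier R" "r \<in> S" "A = clsR a r"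
  using assms unfolding LR_carrier by blast

lemma clsR_in: "a \<in> carrier R \<Longrightarrow> s \<in> S \<Longrightarrow> clsR a s \<in> carrier LR"
  unfolding LR_carrier by blast

lemma LR_add: "a \<in> carrier R \<Longrightarrow> b \<in> carrier R \<Longrightarrow> r \<in> S \<Longrightarrow> q \<in> S \<Longrightarrow>
   clsR a r \<oplus>\<^bsub>LR\<^esub> clsR b q = clsR ((q \<otimes> a) \<oplus> (r \<otimes> b)) (r \<otimes> q)"
  using LR_RLM(2) localization.cls_add[OF ring_localization, of a b r q] by simp

lemma LR_mult: "a \<in> carrier R \<Longrightarrow> b \<in> carrier R \<Longrightarrow> r \<in> S \<Longrightarrow> q \<in> S \<Longrightarrow>
   clsR a r \<otimes>\<^bsub>LR\<^esub> clsR b q = clsR (a \<otimes> b) (r \<otimes> q)"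
  using LR_RLM(4) localization.cls_smult[OF ring_localization, of a b r q] by simp

lemma LR_zero: "\<zero>\<^bsub>LR\<^esub> = clsR \<zero> \<one>"
  using LR_RLM(3) localization.LM_zero[OF ring_localization] by simp

lemmas module_arith_simps = smult_r_distr smult_l_distr smult_assoc1[symmetric] m_ac M.a_ac r_distr l_distr

lemma LM_abelian_group: "abelian_group LM"
proof (rule abelian_groupI)
  fix X Y assume "X \<in> carrier LM" "Y \<in> carrier LM"
  then obtain x s y t where xs: "x \<in> carrier M" "s \<in> S" "X = cls x s" and yt: "y \<in> carrier M" "t \<in> S" "Y = cls y t"
    by (metis LM_cases)
  have c: "s \<in> carrier R" "t \<in> carrier R" using xs yt S_car by auto
  show "X \<oplus>\<^bsub>LM\<^esub> Y \<in> carrier LM"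
    using xs yt c by (simp add: cls_add cls_in S_mult)
  show "X \<oplus>\<^bsub>LM\<^esub> Y = Y \<oplus>\<^bsub>LM\<^esub> X"
    using xs yt c by (simp add: cls_add M.a_comm m_comm)
next
  fix X Y Z assume "X \<in> carrier LM" "Y \<in> carrier LM" "Z \<in> carrier LM"
  then obtain x s y t z w where xs: "x \<in> carrier M" "s \<in> S" "X = cls x s" and yt: "y \<in> carrier M" "t \<in> S" "Y = cls y t"
    and zw: "z \<in> carrier M" "w \<in> S" "Z = cls z w"
    by (metis LM_cases)
  have c: "s \<in> carrier R" "t \<in> carrier R" "w \<in> carrier R" using xs yt zw S_car by auto
  have n: "w \<odot>\<^bsub>M\<^esub> (t \<odot>\<^bsub>M\<^esub> x \<oplus>\<^bsub>M\<^esub> s \<odot>\<^bsub>M\<^esub> y) \<oplus>\<^bsub>M\<^esub> (s \<otimes> t) \<odot>\<^bsub>M\<^esub> z =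
         (t \<otimes> w) \<odot>\<^bsub>M\<^esub> x \<oplus>\<^bsub>M\<^esub> s \<odot>\<^bsub>M\<^esub> (w \<odot>\<^bsub>M\<^esub> y \<oplus>\<^bsub>M\<^esub> t \<odot>\<^bsub>M\<^esub> z)"
    using xs yt zw c by (simp add: module_arith_simps)
  show "X \<oplus>\<^bsub>LM\<^esub> Y \<oplus>\<^bsub>LM\<^esub> Z = X \<oplus>\<^bsub>LM\<^esub> (Y \<oplus>\<^bsub>LM\<^esub> Z)"
    using xs yt zw c S_mult by (simp add: cls_add n m_assoc)
next
  show "\<zero>\<^bsub>LM\<^esub> \<in> carrier LM" unfolding LM_zero by (rule cls_in) (simp_all add: one_S)
next
  fix X assume "X \<in> carrier LM"
  then obtain x s where xs: "x \<in> carrier M" "s \<in> S" "X = cls x s" by (metis LM_cases)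
  have c: "s \<in> carrier R" using xs S_car by auto
  show "\<zero>\<^bsub>LM\<^esub> \<oplus>\<^bsub>LM\<^esub> X = X"
    using xs c one_S by (simp add: LM_zero cls_add)
  have "cls (\<ominus>\<^bsub>M\<^esub> x) s \<oplus>\<^bsub>LM\<^esub> X = cls (s \<odot>\<^bsub>M\<^esub> (\<ominus>\<^bsub>M\<^esub> x) \<oplus>\<^bsub>M\<^esub> s \<odot>\<^bsub>M\<^esub> x) (s \<otimes> s)"
    using xs by (simp add: cls_add)
  also have "s \<odot>\<^bsub>M\<^esub> (\<ominus>\<^bsub>M\<^esub> x) \<oplus>\<^bsub>M\<^esub> s \<odot>\<^bsub>M\<^esub> x = \<zero>\<^bsub>M\<^esub>"
    using xs c by (simp add: smult_r_distr[symmetric] M.l_neg)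
  also have "cls \<zero>\<^bsub>M\<^esub> (s \<otimes> s) = \<zero>\<^bsub>LM\<^esub>"
    unfolding LM_zero by (rule cls_eqI) (use xs c one_S S_mult in auto)
  finally show "\<exists>Y\<in>carrier LM. Y \<oplus>\<^bsub>LM\<^esub> X = \<zero>\<^bsub>LM\<^esub>"
    using xs cls_in by blast
qed

lemma LM_smult_closed: "A \<in> carrier LR \<Longrightarrow> X \<in> carrier LM \<Longrightarrow> A \<odot>\<^bsub>LM\<^esub> X \<in> carrier LM"
  by (elim LR_cases LM_cases) (simp add: cls_smult cls_in S_mult)

lemma LM_l_distr:
  assumes "A \<in> carrier LR" "B \<in> carrier LR" "X \<in> carrier LM"
  shows "(A \<oplus>\<^bsub>LR\<^esub> B) \<odot>\<^bsub>LM\<^esub> X = A \<odot>\<^bsub>LM\<^esub> X \<oplus>\<^bsub>LM\<^esub> B \<odot>\<^bsub>LM\<^esub> X"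
proof -
  obtain a r where ar: "a \<in> carrier R" "r \<in> S" "A = clsR a r" using assms(1) by (rule LR_cases)
  obtain b q where bq: "b \<in> carrier R" "q \<in> S" "B = clsR b q" using assms(2) by (rule LR_cases)
  obtain x s where xs: "x \<in> carrier M" "s \<in> S" "X = cls x s" using assms(3) by (rule LM_cases)
  have c: "r \<in> carrier R" "q \<in> carrier R" "s \<in> carrier R" using ar bq xs S_car by auto
  have "(A \<oplus>\<^bsub>LR\<^esub> B) \<odot>\<^bsub>LM\<^esub> X = cls ((q \<otimes> a \<oplus> r \<otimes> b) \<odot>\<^bsub>M\<^esub> x) ((r \<otimes> q) \<otimes> s)"
    using ar bq xs c S_mult by (simp add: LR_add cls_smult)
  also have "\<dots> = cls ((q \<otimes> s) \<odot>\<^bsub>M\<^esub> (a \<odot>\<^bsub>M\<^esub> x) \<oplus>\<^bsub>M\<^esub> (r \<otimes> s) \<odot>\<^bsub>M\<^esub> (b \<odot>\<^bsub>M\<^esub> x)) ((r \<otimes> s) \<otimes> (q \<otimes> s))"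
    by (rule cls_eqI) (use ar bq xs c S_mult in \<open>simp_all add: module_arith_simps\<close>)
  also have "\<dots> = A \<odot>\<^bsub>LM\<^esub> X \<oplus>\<^bsub>LM\<^esub> B \<odot>\<^bsub>LM\<^esub> X"
    using ar bq xs c S_mult by (simp add: cls_add cls_smult)
  finally show ?thesis .
qed

lemma LM_r_distr:
  assumes "A \<in> carrier LR" "X \<in> carrier LM" "Y \<in> carrier LM"
  shows "A \<odot>\<^bsub>LM\<^esub> (X \<oplus>\<^bsub>LM\<^esub> Y) = A \<odot>\<^bsub>LM\<^esub> X \<oplus>\<^bsub>LM\<^esub> A \<odot>\<^bsub>LM\<^esub> Y"
proof -
  obtain a r where ar: "a \<in> carrier R" "r \<in> S" "A = clsR a r" using assms(1) by (rule LR_cases)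
  obtain x s where xs: "x \<in> carrier M" "s \<in> S" "X = cls x s" using assms(2) by (rule LM_cases)
  obtain y t where yt: "y \<in> carrier M" "t \<in> S" "Y = cls y t" using assms(3) by (rule LM_cases)
  have c: "r \<in> carrier R" "t \<in> carrier R" "s \<in> carrier R" using ar yt xs S_car by auto
  have "A \<odot>\<^bsub>LM\<^esub> (X \<oplus>\<^bsub>LM\<^esub> Y) = cls (a \<odot>\<^bsub>M\<^esub> (t \<odot>\<^bsub>M\<^esub> x \<oplus>\<^bsub>M\<^esub> s \<odot>\<^bsub>M\<^esub> y)) (r \<otimes> (s \<otimes> t))"
    using ar yt xs c S_mult by (simp add: cls_add cls_smult)
  also have "\<dots> = cls ((r \<otimes> t) \<odot>\<^bsub>M\<^esub> (a \<odot>\<^bsub>M\<^esub> x) \<oplus>\<^bsub>M\<^esub> (r \<otimes> s) \<odot>\<^bsub>M\<^esub> (a \<odot>\<^bsub>M\<^esub> y)) ((r \<otimes> s) \<otimes> (r \<otimes> t))"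
    by (rule cls_eqI) (use ar yt xs c S_mult in \<open>simp_all add: module_arith_simps\<close>)
  also have "\<dots> = A \<odot>\<^bsub>LM\<^esub> X \<oplus>\<^bsub>LM\<^esub> A \<odot>\<^bsub>LM\<^esub> Y"
    using ar yt xs c S_mult by (simp add: cls_add cls_smult)
  finally show ?thesis .
qed

lemma LM_assoc1:
  assumes "A \<in> carrier LR" "B \<in> carrier LR" "X \<in> carrier LM"
  shows "(A \<otimes>\<^bsub>LR\<^esub> B) \<odot>\<^bsub>LM\<^esub> X = A \<odot>\<^bsub>LM\<^esub> (B \<odot>\<^bsub>LM\<^esub> X)"
proof -
  obtain a r where ar: "a \<in> carrier R" "r \<in> S" "A = clsR a r" using assms(1) by (rule LR_cases)
  obtain b q where bq: "b \<in> carrier R" "q \<in> S" "B = clsR b q" using assms(2) by (rule LR_cases)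
  obtain x s where xs: "x \<in> carrier M" "s \<in> S" "X = cls x s" using assms(3) by (rule LM_cases)
  have c: "r \<in> carrier R" "q \<in> carrier R" "s \<in> carrier R" using ar bq xs S_car by auto
  show ?thesis
    using ar bq xs c S_mult by (simp add: LR_mult cls_smult smult_assoc1 m_assoc)
qed

lemma LM_one: "X \<in> carrier LM \<Longrightarrow> \<one>\<^bsub>LR\<^esub> \<odot>\<^bsub>LM\<^esub> X = X"
  by (elim LM_cases) (simp add: LR_one cls_smult one_S S_car)

end

lemma loc_ring_cring:
  assumes "cring R" "mult_subset R S"
  shows "cring (loc_ring R S)"
proof -
  interpret L: localization R S "ring_as_module R"
    by (rule localization.intro[OF ring_as_module_module[OF assms(1)] assms(2)])
  have ag: "abelian_group (loc_ring R S)"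
    by (rule abelian_group_cong[OF L.LM_abelian_group]) (simp_all add: L.LR_RLM)
  have cm: "comm_monoid (loc_ring R S)"
  proof (rule comm_monoidI)
    fix x y assume xy: "x \<in> carrier (loc_ring R S)" "y \<in> carrier (loc_ring R S)"
    show "x \<otimes>\<^bsub>loc_ring R S\<^esub> y \<in> carrier (loc_ring R S)"
      using L.LM_smult_closed[of x y] xy L.LR_RLM by simp
    show "x \<otimes>\<^bsub>loc_ring R S\<^esub> y = y \<otimes>\<^bsub>loc_ring R S\<^esub> x"
      using xy by (elim L.LR_cases) (simp add: L.LR_mult L.m_comm L.S_car)
  next
    show "\<one>\<^bsub>loc_ring R S\<^esub> \<in> carrier (loc_ring R S)"
      unfolding L.LR_one by (rule L.clsR_in) (simp_all add: L.one_S)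
  next
    fix x y z assume xyz: "x \<in> carrier (loc_ring R S)" "y \<in> carrier (loc_ring R S)" "z \<in> carrier (loc_ring R S)"
    show "x \<otimes>\<^bsub>loc_ring R S\<^esub> y \<otimes>\<^bsub>loc_ring R S\<^esub> z = x \<otimes>\<^bsub>loc_ring R S\<^esub> (y \<otimes>\<^bsub>loc_ring R S\<^esub> z)"
      using L.LM_assoc1[of x y z] xyz L.LR_RLM by simp
  next
    fix x assume "x \<in> carrier (loc_ring R S)"
    then show "\<one>\<^bsub>loc_ring R S\<^esub> \<otimes>\<^bsub>loc_ring R S\<^esub> x = x"
      using L.LM_one[of x] L.LR_RLM by simp
  qed
  show ?thesis
  proof (rule cringI[OF ag cm])
    fix x y z assume xyz: "x \<in> carrier (loc_ring R S)" "y \<in> carrier (loc_ring R S)" "z \<in> carrier (loc_ring R S)"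
    show "(x \<oplus>\<^bsub>loc_ring R S\<^esub> y) \<otimes>\<^bsub>loc_ring R S\<^esub> z = x \<otimes>\<^bsub>loc_ring R S\<^esub> z \<oplus>\<^bsub>loc_ring R S\<^esub> y \<otimes>\<^bsub>loc_ring R S\<^esub> z"
      using L.LM_l_distr[of x y z] xyz L.LR_RLM by simp
  qed
qed

lemma loc_module_module:
  assumes "module R M" "mult_subset R S"
  shows "module (loc_ring R S) (loc_module R S M)"
proof -
  interpret L: localization R S M by (rule localization.intro[OF assms])
  show ?thesis
    by (rule moduleI[OF loc_ring_cring[OF L.is_cring assms(2)] L.LM_abelian_group])
       (simp_all add: L.LM_smult_closed L.LM_l_distr L.LM_r_distr L.LM_assoc1 L.LM_one)
qed

text \<open>\<open>\<Sum>m<k. x m / d m\<close> brought to the common denominator \<open>\<Prod>m<k. d m\<close>.\<close>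

primrec frac_sum_den :: "'a ring \<Rightarrow> (nat \<Rightarrow> 'a) \<Rightarrow> nat \<Rightarrow> 'a" where
  "frac_sum_den R d 0 = \<one>\<^bsub>R\<^esub>"
| "frac_sum_den R d (Suc k) = d k \<otimes>\<^bsub>R\<^esub> frac_sum_den R d k"

primrec frac_sum_num :: "'a ring \<Rightarrow> ('a, 'b) module \<Rightarrow> (nat \<Rightarrow> 'b) \<Rightarrow> (nat \<Rightarrow> 'a) \<Rightarrow> nat \<Rightarrow> 'b" where
  "frac_sum_num R M x d 0 = \<zero>\<^bsub>M\<^esub>"
| "frac_sum_num R M x d (Suc k) = (frac_sum_den R d k \<odot>\<^bsub>M\<^esub> x k) \<oplus>\<^bsub>M\<^esub> (d k \<odot>\<^bsub>M\<^esub> frac_sum_num R M x d k)"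

context localization begin

lemma frac_sum_den_S: "(\<And>m. d m \<in> S) \<Longrightarrow> frac_sum_den R d k \<in> S"
  by (induction k) (simp_all add: one_S S_mult)

lemma frac_sum_num_closed: "(\<And>m. d m \<in> S) \<Longrightarrow> (\<And>m. x m \<in> carrier M) \<Longrightarrow> frac_sum_num R M x d k \<in> carrier M"
  by (induction k) (simp_all add: frac_sum_den_S S_car)

lemma cls_finsum:
  assumes "\<And>m. d m \<in> S" "\<And>m. x m \<in> carrier M"
  shows "finsum LM (\<lambda>m. cls (x m) (d m)) {..<k} = cls (frac_sum_num R M x d k) (frac_sum_den R d k)"
proof (induction k)
  interpret LA: abelian_group LM by (rule LM_abelian_group)
  case 0 show ?case by (simp add: LM_zero)
next
  case (Suc k)
  interpret LA: abelian_group LM by (rule LM_abelian_group)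
  have "finsum LM (\<lambda>m. cls (x m) (d m)) {..<Suc k} = cls (x k) (d k) \<oplus>\<^bsub>LM\<^esub> finsum LM (\<lambda>m. cls (x m) (d m)) {..<k}"
    unfolding lessThan_Suc by (rule LA.finsum_insert) (auto intro: cls_in assms)
  also have "\<dots> = cls (x k) (d k) \<oplus>\<^bsub>LM\<^esub> cls (frac_sum_num R M x d k) (frac_sum_den R d k)" by (simp add: Suc.IH)
  also have "\<dots> = cls (frac_sum_num R M x d (Suc k)) (frac_sum_den R d (Suc k))"
    using cls_add[of "x k" "frac_sum_num R M x d k" "d k" "frac_sum_den R d k"] assms frac_sum_num_closed frac_sum_den_S by simp
  finally show ?case .
qed

lemma cls_one_finsum:
  assumes "finite B" "f \<in> B \<rightarrow> carrier M"
  shows "finsum LM (\<lambda>b. cls (f b) \<one>) B = cls (finsum M f B) \<one>"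
  using assms
proof (induction B rule: finite_induct)
  interpret LA: abelian_group LM by (rule LM_abelian_group)
  case empty show ?case by (simp add: LM_zero)
next
  case (insert b B)
  interpret LA: abelian_group LM by (rule LM_abelian_group)
  have fb: "f b \<in> carrier M" and fB: "f \<in> B \<rightarrow> carrier M" using insert by auto
  have "finsum LM (\<lambda>b. cls (f b) \<one>) (insert b B) = cls (f b) \<one> \<oplus>\<^bsub>LM\<^esub> finsum LM (\<lambda>b. cls (f b) \<one>) B"
    by (rule LA.finsum_insert) (use insert fb fB one_S in \<open>auto intro: cls_in\<close>)
  also have "\<dots> = cls (f b \<oplus>\<^bsub>M\<^esub> finsum M f B) \<one>"
    using insert.IH[OF fB] cls_add[of "f b" "finsum M f B" \<one> \<one>] fb fB one_S by simp
  also have "\<dots> = cls (finsum M f (insert b B)) \<one>" using insert fb fB by simp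
  finally show ?case .
qed

lemma finsum_LR: "finsum LR = finsum RLM"
  by (rule finsum_cong_struct) (simp_all add: LR_RLM)

lemma clsR_one_add: "a \<in> carrier R \<Longrightarrow> b \<in> carrier R \<Longrightarrow> clsR (a \<oplus> b) \<one> = clsR a \<one> \<oplus>\<^bsub>LR\<^esub> clsR b \<one>"
  by (simp add: LR_add one_S)

lemma clsR_one_mult: "a \<in> carrier R \<Longrightarrow> b \<in> carrier R \<Longrightarrow> clsR (a \<otimes> b) \<one> = clsR a \<one> \<otimes>\<^bsub>LR\<^esub> clsR b \<one>"
  by (simp add: LR_mult one_S)

lemma clsR_zero: "r \<in> S \<Longrightarrow> clsR \<zero> r = \<zero>\<^bsub>LR\<^esub>"
  unfolding LR_zero by (rule localization.cls_eqI[OF ring_localization]) (simp_all add: one_S S_car)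

lemma cls_zero: "r \<in> S \<Longrightarrow> cls \<zero>\<^bsub>M\<^esub> r = \<zero>\<^bsub>LM\<^esub>"
  unfolding LM_zero by (rule cls_eqI) (simp_all add: one_S S_car)

end

section \<open>Free modules and linear maps\<close>

locale free_module_cring = cring A for A :: "'a ring" (structure) + fixes I :: "'i set"
begin

abbreviation "FM \<equiv> free_module A I"

lemma FM_carrier: "f \<in> carrier FM \<longleftrightarrow>
   (\<forall>i\<in>I. f i \<in> carrier A) \<and> (\<forall>i. i \<notin> I \<longrightarrow> f i = \<zero>) \<and> finite {i\<in>I. f i \<noteq> \<zero>}"
  by (simp add: free_module_def)

lemma FM_simps:
  "\<zero>\<^bsub>FM\<^esub> = (\<lambda>i. \<zero>)"
  "f \<oplus>\<^bsub>FM\<^esub> g = (\<lambda>i. if i \<in> I then f i \<oplus> g i else \<zero>)"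
  "a \<odot>\<^bsub>FM\<^esub> f = (\<lambda>i. if i \<in> I then a \<otimes> f i else \<zero>)"
  by (simp_all add: free_module_def)

lemma FM_val: "f \<in> carrier FM \<Longrightarrow> i \<in> I \<Longrightarrow> f i \<in> carrier A"
  and FM_out: "f \<in> carrier FM \<Longrightarrow> i \<notin> I \<Longrightarrow> f i = \<zero>"
  and FM_fin: "f \<in> carrier FM \<Longrightarrow> finite {i\<in>I. f i \<noteq> \<zero>}"
  by (auto simp: FM_carrier)

lemma FM_val': "f \<in> carrier FM \<Longrightarrow> f i \<in> carrier A"
  by (cases "i \<in> I") (auto simp: FM_val FM_out)

lemma FM_eqI: "f \<in> carrier FM \<Longrightarrow> g \<in> carrier FM \<Longrightarrow> (\<And>i. i \<in> I \<Longrightarrow> f i = g i) \<Longrightarrow> f = g"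
  by (rule ext) (metis FM_out)

lemma FM_add_closed: "f \<in> carrier FM \<Longrightarrow> g \<in> carrier FM \<Longrightarrow> f \<oplus>\<^bsub>FM\<^esub> g \<in> carrier FM"
proof -
  assume f: "f \<in> carrier FM" and g: "g \<in> carrier FM"
  have "{i\<in>I. (if i \<in> I then f i \<oplus> g i else \<zero>) \<noteq> \<zero>} \<subseteq> {i\<in>I. f i \<noteq> \<zero>} \<union> {i\<in>I. g i \<noteq> \<zero>}"
    using f g by (auto simp: FM_carrier)
  then have "finite {i\<in>I. (if i \<in> I then f i \<oplus> g i else \<zero>) \<noteq> \<zero>}"
    using FM_fin[OF f] FM_fin[OF g] by (meson finite_Un finite_subset)
  then show ?thesis using f g by (simp add: FM_carrier FM_simps)
qed

lemma FM_smult_closed: "a \<in> carrier A \<Longrightarrow> f \<in> carrier FM \<Longrightarrow> a \<odot>\<^bsub>FM\<^esub> f \<in> carrier FM"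
proof -
  assume a: "a \<in> carrier A" and f: "f \<in> carrier FM"
  have "{i\<in>I. (if i \<in> I then a \<otimes> f i else \<zero>) \<noteq> \<zero>} \<subseteq> {i\<in>I. f i \<noteq> \<zero>}"
    using f a by (auto simp: FM_carrier)
  then have "finite {i\<in>I. (if i \<in> I then a \<otimes> f i else \<zero>) \<noteq> \<zero>}"
    using FM_fin[OF f] by (meson finite_subset)
  then show ?thesis using f a by (simp add: FM_carrier FM_simps)
qed

lemma FM_zero_closed: "\<zero>\<^bsub>FM\<^esub> \<in> carrier FM"
  by (simp add: FM_carrier FM_simps)

lemma FM_abelian_group: "abelian_group FM"
proof (rule abelian_groupI)
  fix x assume x: "x \<in> carrier FM"
  have "(\<ominus> \<one>) \<odot>\<^bsub>FM\<^esub> x \<oplus>\<^bsub>FM\<^esub> x = \<zero>\<^bsub>FM\<^esub>"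
    using x by (auto simp: FM_simps fun_eq_iff FM_val l_minus l_neg)
  then show "\<exists>y\<in>carrier FM. y \<oplus>\<^bsub>FM\<^esub> x = \<zero>\<^bsub>FM\<^esub>"
    using x by (intro bexI[of _ "(\<ominus> \<one>) \<odot>\<^bsub>FM\<^esub> x"] FM_smult_closed) simp_all
next
  show "x \<oplus>\<^bsub>FM\<^esub> y \<in> carrier FM" if "x \<in> carrier FM" "y \<in> carrier FM" for x y
    using that by (rule FM_add_closed)
  show "\<zero>\<^bsub>FM\<^esub> \<in> carrier FM" by (rule FM_zero_closed)
qed (auto simp: FM_simps fun_eq_iff FM_val FM_out a_ac)

lemma FM_module: "module A FM"
proof (rule moduleI[OF is_cring FM_abelian_group])
  show "a \<odot>\<^bsub>FM\<^esub> x \<in> carrier FM" if "a \<in> carrier A" "x \<in> carrier FM" for a x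
    using that by (rule FM_smult_closed)
qed (auto simp: FM_simps fun_eq_iff FM_val FM_out l_distr r_distr m_assoc)

sublocale F: module A FM by (rule FM_module)

lemma FM_finsum:
  assumes "finite B" "f \<in> B \<rightarrow> carrier FM"
  shows "finsum FM f B = (\<lambda>i. if i \<in> I then (\<Oplus>b\<in>B. f b i) else \<zero>)"
  using assms
proof (induction B rule: finite_induct)
  case empty then show ?case by (simp add: fun_eq_iff FM_simps)
next
  case (insert b B)
  then have fb: "f b \<in> carrier FM" and fB: "f \<in> B \<rightarrow> carrier FM" by auto
  have "finsum FM f (insert b B) = f b \<oplus>\<^bsub>FM\<^esub> finsum FM f B"
    using insert fb fB by (simp add: F.finsum_insert)
  also have "\<dots> = (\<lambda>i. if i \<in> I then (\<Oplus>b\<in>insert b B. f b i) else \<zero>)"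
    using insert.IH[OF fB] insert fb fB by (auto simp: FM_simps fun_eq_iff finsum_insert FM_val Pi_def)
  finally show ?case .
qed

definition basis :: "'i \<Rightarrow> 'i \<Rightarrow> 'a" where "basis j = (\<lambda>i. if i = j then \<one> else \<zero>)"

lemma basis_closed: "j \<in> I \<Longrightarrow> basis j \<in> carrier FM"
proof -
  assume j: "j \<in> I"
  have "{i\<in>I. basis j i \<noteq> \<zero>} \<subseteq> {j}" by (auto simp: basis_def)
  then show ?thesis using j by (auto simp: FM_carrier basis_def intro: finite_subset)
qed

lemma FM_basis_expansion:
  assumes v: "v \<in> carrier FM" and B: "finite B" "B \<subseteq> I" "{i\<in>I. v i \<noteq> \<zero>} \<subseteq> B"
  shows "v = (\<Oplus>\<^bsub>FM\<^esub>j\<in>B. v j \<odot>\<^bsub>FM\<^esub> basis j)"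
proof -
  have cl: "(\<lambda>j. v j \<odot>\<^bsub>FM\<^esub> basis j) \<in> B \<rightarrow> carrier FM"
    using v B by (auto intro!: FM_smult_closed basis_closed FM_val)
  show ?thesis
  proof (rule FM_eqI[OF v])
    show "(\<Oplus>\<^bsub>FM\<^esub>j\<in>B. v j \<odot>\<^bsub>FM\<^esub> basis j) \<in> carrier FM"
      using cl by (rule F.finsum_closed)
  next
    fix i assume i: "i \<in> I"
    have "(\<Oplus>\<^bsub>FM\<^esub>j\<in>B. v j \<odot>\<^bsub>FM\<^esub> basis j) i = (\<Oplus>j\<in>B. (v j \<odot>\<^bsub>FM\<^esub> basis j) i)"
      using FM_finsum[OF B(1) cl] i by simp
    also have "\<dots> = (\<Oplus>j\<in>B. if i = j then v j else \<zero>)"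
      by (rule finsum_cong') (use i v B in \<open>auto simp: FM_simps basis_def FM_val\<close>)
    also have "\<dots> = v i"
    proof (cases "i \<in> B")
      case True
      have "v \<in> B \<rightarrow> carrier A" using B v FM_val by auto
      then show ?thesis using finsum_singleton[of i B v] B True by simp
    next
      case False
      then have "v i = \<zero>" using B(3) i by auto
      moreover have "(\<Oplus>j\<in>B. if i = j then v j else \<zero>) = \<zero>"
        using False by (intro add.finprod_one_eqI) auto
      ultimately show ?thesis by simp
    qed
    finally show "v i = (\<Oplus>\<^bsub>FM\<^esub>j\<in>B. v j \<odot>\<^bsub>FM\<^esub> basis j) i" by simp
  qed
qed

end

lemma linear_map_closed: "linear_map A M N f \<Longrightarrow> x \<in> carrier M \<Longrightarrow> f x \<in> carrier N"
  unfolding linear_map_def by auto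

lemma linear_map_add: "linear_map A M N f \<Longrightarrow> x \<in> carrier M \<Longrightarrow> y \<in> carrier M \<Longrightarrow>
   f (x \<oplus>\<^bsub>M\<^esub> y) = f x \<oplus>\<^bsub>N\<^esub> f y"
  unfolding linear_map_def by auto

lemma linear_map_smult: "linear_map A M N f \<Longrightarrow> a \<in> carrier A \<Longrightarrow> x \<in> carrier M \<Longrightarrow>
   f (a \<odot>\<^bsub>M\<^esub> x) = a \<odot>\<^bsub>N\<^esub> f x"
  unfolding linear_map_def by auto

lemma linear_map_zero:
  assumes "module A M" "module A N" "linear_map A M N f"
  shows "f \<zero>\<^bsub>M\<^esub> = \<zero>\<^bsub>N\<^esub>"
proof -
  interpret M: module A M by fact
  interpret N: module A N by fact
  have "f \<zero>\<^bsub>M\<^esub> = f (\<zero>\<^bsub>A\<^esub> \<odot>\<^bsub>M\<^esub> \<zero>\<^bsub>M\<^esub>)" by simp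
  also have "\<dots> = \<zero>\<^bsub>A\<^esub> \<odot>\<^bsub>N\<^esub> f \<zero>\<^bsub>M\<^esub>" by (rule linear_map_smult[OF assms(3)]) simp_all
  also have "\<dots> = \<zero>\<^bsub>N\<^esub>" using linear_map_closed[OF assms(3)] by simp
  finally show ?thesis .
qed

lemma linear_map_finsum:
  assumes "module A M" "module A N" "linear_map A M N f" "finite B" "h \<in> B \<rightarrow> carrier M"
  shows "f (finsum M h B) = finsum N (\<lambda>b. f (h b)) B"
  using assms(4,5)
proof (induction B rule: finite_induct)
  case empty
  interpret M: module A M by fact
  interpret N: module A N by fact
  show ?case using linear_map_zero[OF assms(1-3)] by simp
next
  case (insert b B)
  interpret M: module A M by fact
  interpret N: module A N by fact
  have hb: "h b \<in> carrier M" and hB: "h \<in> B \<rightarrow> carrier M" using insert by auto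
  have "f (finsum M h (insert b B)) = f (h b \<oplus>\<^bsub>M\<^esub> finsum M h B)"
    using insert hb hB by simp
  also have "\<dots> = f (h b) \<oplus>\<^bsub>N\<^esub> f (finsum M h B)"
    using linear_map_add[OF assms(3) hb M.finsum_closed[OF hB]] .
  also have "\<dots> = finsum N (\<lambda>b. f (h b)) (insert b B)"
    using insert.IH[OF hB] insert hb hB linear_map_closed[OF assms(3)]
    by (simp add: Pi_def N.finsum_insert)
  finally show ?case .
qed

section \<open>Generators and relations\<close>

locale generated_module = cring R for R :: "'a ring" (structure) +
  fixes F :: "('a, 'b) module" and g :: "nat \<Rightarrow> 'b"
  assumes F: "module R F" and g: "\<And>n. g n \<in> carrier F"
begin

sublocale FR: free_module_cring R "UNIV :: nat set" by unfold_locales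
interpretation FF: module R F by (rule F)

abbreviation "RelM \<equiv> relation_module R F g"

lemma eval_map_sum:
  assumes "c \<in> carrier FR.FM" "finite B" "{i. c i \<noteq> \<zero>} \<subseteq> B"
  shows "eval_map R F g c = finsum F (\<lambda>i. c i \<odot>\<^bsub>F\<^esub> g i) B"
  unfolding eval_map_def
  by (rule FF.add.finprod_mono_neutral_cong_left)
     (use assms g FR.FM_val' in \<open>auto simp: Pi_def\<close>)

lemma RelM_carrier: "carrier RelM = {c \<in> carrier FR.FM. eval_map R F g c = \<zero>\<^bsub>F\<^esub>}"
  by (simp add: relation_module_def)

lemma RelM_ops: "add RelM = add FR.FM" "zero RelM = zero FR.FM" "smult RelM = smult FR.FM"
  by (simp_all add: relation_module_def)

lemma eval_add:
  assumes "c \<in> carrier FR.FM" "e \<in> carrier FR.FM"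
  shows "eval_map R F g (c \<oplus>\<^bsub>FR.FM\<^esub> e) = eval_map R F g c \<oplus>\<^bsub>F\<^esub> eval_map R F g e"
proof -
  let ?B = "{i. c i \<noteq> \<zero>} \<union> {i. e i \<noteq> \<zero>}"
  have fin: "finite ?B" using FR.FM_fin[OF assms(1)] FR.FM_fin[OF assms(2)] by simp
  have ce: "c \<oplus>\<^bsub>FR.FM\<^esub> e \<in> carrier FR.FM" using assms by (rule FR.FM_add_closed)
  have "eval_map R F g (c \<oplus>\<^bsub>FR.FM\<^esub> e) = finsum F (\<lambda>i. (c \<oplus>\<^bsub>FR.FM\<^esub> e) i \<odot>\<^bsub>F\<^esub> g i) ?B"
    by (rule eval_map_sum[OF ce fin]) (auto simp: FR.FM_simps)
  also have "\<dots> = finsum F (\<lambda>i. c i \<odot>\<^bsub>F\<^esub> g i \<oplus>\<^bsub>F\<^esub> e i \<odot>\<^bsub>F\<^esub> g i) ?B"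
    by (rule FF.finsum_cong') (use assms g in \<open>auto simp: FR.FM_simps FR.FM_val' FF.smult_l_distr\<close>)
  also have "\<dots> = finsum F (\<lambda>i. c i \<odot>\<^bsub>F\<^esub> g i) ?B \<oplus>\<^bsub>F\<^esub> finsum F (\<lambda>i. e i \<odot>\<^bsub>F\<^esub> g i) ?B"
    by (rule FF.finsum_addf) (use assms g FR.FM_val' in auto)
  also have "\<dots> = eval_map R F g c \<oplus>\<^bsub>F\<^esub> eval_map R F g e"
    using eval_map_sum[OF assms(1) fin] eval_map_sum[OF assms(2) fin] by auto
  finally show ?thesis .
qed

lemma eval_smult:
  assumes "c \<in> carrier FR.FM" "r \<in> carrier R"
  shows "eval_map R F g (r \<odot>\<^bsub>FR.FM\<^esub> c) = r \<odot>\<^bsub>F\<^esub> eval_map R F g c"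
proof -
  let ?B = "{i. c i \<noteq> \<zero>}"
  have fin: "finite ?B" using FR.FM_fin[OF assms(1)] by simp
  have rc: "r \<odot>\<^bsub>FR.FM\<^esub> c \<in> carrier FR.FM" using assms by (simp add: FR.FM_smult_closed)
  have "eval_map R F g (r \<odot>\<^bsub>FR.FM\<^esub> c) = finsum F (\<lambda>i. (r \<odot>\<^bsub>FR.FM\<^esub> c) i \<odot>\<^bsub>F\<^esub> g i) ?B"
    by (rule eval_map_sum[OF rc fin]) (use assms(2) in \<open>auto simp: FR.FM_simps\<close>)
  also have "\<dots> = finsum F (\<lambda>i. r \<odot>\<^bsub>F\<^esub> (c i \<odot>\<^bsub>F\<^esub> g i)) ?B"
    by (rule FF.finsum_cong') (use assms g in \<open>auto simp: FR.FM_simps FR.FM_val' FF.smult_assoc1\<close>)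
  also have "\<dots> = r \<odot>\<^bsub>F\<^esub> finsum F (\<lambda>i. c i \<odot>\<^bsub>F\<^esub> g i) ?B"
    by (rule FF.finsum_smult_ldistr[symmetric]) (use assms g FR.FM_val' fin in auto)
  also have "\<dots> = r \<odot>\<^bsub>F\<^esub> eval_map R F g c"
    using eval_map_sum[OF assms(1) fin] by auto
  finally show ?thesis .
qed

lemma eval_zero: "eval_map R F g \<zero>\<^bsub>FR.FM\<^esub> = \<zero>\<^bsub>F\<^esub>"
  by (simp add: eval_map_def FR.FM_simps)

lemma RelM_abelian_monoid: "abelian_monoid RelM"
proof (rule abelian_monoidI)
  fix x y assume "x \<in> carrier RelM" "y \<in> carrier RelM"
  then show "x \<oplus>\<^bsub>RelM\<^esub> y \<in> carrier RelM"
    by (simp add: RelM_carrier RelM_ops eval_add FR.FM_add_closed)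
  show "x \<oplus>\<^bsub>RelM\<^esub> y = y \<oplus>\<^bsub>RelM\<^esub> x"
    using \<open>x \<in> carrier RelM\<close> \<open>y \<in> carrier RelM\<close> by (simp add: RelM_carrier RelM_ops FR.F.a_comm)
next
  show "\<zero>\<^bsub>RelM\<^esub> \<in> carrier RelM"
    by (simp add: RelM_carrier RelM_ops eval_zero FR.FM_zero_closed)
next
  fix x y z assume "x \<in> carrier RelM" "y \<in> carrier RelM" "z \<in> carrier RelM"
  then show "x \<oplus>\<^bsub>RelM\<^esub> y \<oplus>\<^bsub>RelM\<^esub> z = x \<oplus>\<^bsub>RelM\<^esub> (y \<oplus>\<^bsub>RelM\<^esub> z)"
    by (simp add: RelM_carrier RelM_ops FR.F.a_assoc)
next
  fix x assume "x \<in> carrier RelM"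
  then show "\<zero>\<^bsub>RelM\<^esub> \<oplus>\<^bsub>RelM\<^esub> x = x"
    by (simp add: RelM_carrier RelM_ops)
qed

lemma RelM_smult_closed: "r \<in> carrier R \<Longrightarrow> x \<in> carrier RelM \<Longrightarrow> r \<odot>\<^bsub>RelM\<^esub> x \<in> carrier RelM"
  by (simp add: RelM_carrier RelM_ops eval_smult FR.FM_smult_closed)

lemma RelM_finsum_pointwise:
  fixes r :: "nat \<Rightarrow> 'a" and kg :: "nat \<Rightarrow> nat \<Rightarrow> 'a"
  assumes "\<And>j. r j \<in> carrier R" "\<And>j. kg j \<in> carrier RelM"
  shows "finsum RelM (\<lambda>j. r j \<odot>\<^bsub>RelM\<^esub> kg j) {..<l} n = (\<Oplus>j\<in>{..<l}. r j \<otimes> kg j n)"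
proof (induction l)
  case 0
  interpret RA: abelian_monoid RelM by (rule RelM_abelian_monoid)
  show ?case by (simp add: RelM_ops FR.FM_simps)
next
  case (Suc l)
  interpret RA: abelian_monoid RelM by (rule RelM_abelian_monoid)
  have cl: "(\<lambda>j. r j \<odot>\<^bsub>RelM\<^esub> kg j) \<in> {..<l} \<rightarrow> carrier RelM"
    using assms RelM_smult_closed by auto
  have kgc: "kg j \<in> carrier FR.FM" for j using assms(2)[of j] by (simp add: RelM_carrier)
  have "finsum RelM (\<lambda>j. r j \<odot>\<^bsub>RelM\<^esub> kg j) {..<Suc l} =
        r l \<odot>\<^bsub>RelM\<^esub> kg l \<oplus>\<^bsub>RelM\<^esub> finsum RelM (\<lambda>j. r j \<odot>\<^bsub>RelM\<^esub> kg j) {..<l}"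
    unfolding lessThan_Suc by (rule RA.finsum_insert) (use cl assms RelM_smult_closed in auto)
  then have "finsum RelM (\<lambda>j. r j \<odot>\<^bsub>RelM\<^esub> kg j) {..<Suc l} n =
        r l \<otimes> kg l n \<oplus> finsum RelM (\<lambda>j. r j \<odot>\<^bsub>RelM\<^esub> kg j) {..<l} n"
    by (simp add: RelM_ops FR.FM_simps)
  also have "\<dots> = (\<Oplus>j\<in>{..<Suc l}. r j \<otimes> kg j n)"
    unfolding Suc.IH lessThan_Suc using assms kgc FR.FM_val' by (simp add: finsum_insert Pi_def)
  finally show ?case .
qed

lemma relation_generators_bounded:
  assumes "generated_by R RelM kg"
  obtains L where "\<And>j n. L j \<le> n \<Longrightarrow> kg j n = \<zero>"
proof -
  have "\<exists>l. \<forall>n. l \<le> n \<longrightarrow> kg j n = \<zero>" for j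
  proof -
    have "kg j \<in> carrier FR.FM"
      using assms unfolding generated_by_def by (simp add: RelM_carrier)
    then obtain l where l: "{i. kg j i \<noteq> \<zero>} \<subseteq> {..<l}"
      using FR.FM_fin finite_nat_bounded by fastforce
    have "kg j n = \<zero>" if "l \<le> n" for n
    proof (rule ccontr)
      assume "kg j n \<noteq> \<zero>"
      then have "n < l" using l by blast
      then show False using that by simp
    qed
    then show ?thesis by blast
  qed
  then have "\<forall>j. \<exists>l. \<forall>n. l \<le> n \<longrightarrow> kg j n = \<zero>" by blast
  then obtain L where "\<forall>j n. L j \<le> n \<longrightarrow> kg j n = \<zero>" by (auto dest: choice)
  then show thesis using that by blast
qed

end

lemma (in abelian_monoid) finsum_swap:
  assumes "finite A" "finite B" "\<And>a b. a \<in> A \<Longrightarrow> b \<in> B \<Longrightarrow> f a b \<in> carrier G"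
  shows "(\<Oplus>a\<in>A. \<Oplus>b\<in>B. f a b) = (\<Oplus>b\<in>B. \<Oplus>a\<in>A. f a b)"
  using assms(1,3)
proof (induction A rule: finite_induct)
  case empty then show ?case by (simp add: finsum_zero)
next
  case (insert x A)
  have "(\<Oplus>a\<in>insert x A. \<Oplus>b\<in>B. f a b) = (\<Oplus>b\<in>B. f x b) \<oplus> (\<Oplus>a\<in>A. \<Oplus>b\<in>B. f a b)"
    by (rule finsum_insert) (use insert assms(2) in \<open>auto intro!: finsum_closed\<close>)
  also have "\<dots> = (\<Oplus>b\<in>B. f x b) \<oplus> (\<Oplus>b\<in>B. \<Oplus>a\<in>A. f a b)" using insert by simp
  also have "\<dots> = (\<Oplus>b\<in>B. f x b \<oplus> (\<Oplus>a\<in>A. f a b))"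
    by (rule finsum_addf[symmetric]) (use insert assms(2) in \<open>auto intro!: finsum_closed\<close>)
  also have "\<dots> = (\<Oplus>b\<in>B. \<Oplus>a\<in>insert x A. f a b)"
    by (rule finsum_cong') (use insert assms(2) in \<open>auto intro!: finsum_closed simp: finsum_insert\<close>)
  finally show ?case .
qed

lemma (in module) finsum_smult_rdistr:
  assumes "finite B" "f \<in> B \<rightarrow> carrier R" "x \<in> carrier M"
  shows "(\<Oplus>i\<in>B. f i) \<odot>\<^bsub>M\<^esub> x = (\<Oplus>\<^bsub>M\<^esub>i\<in>B. f i \<odot>\<^bsub>M\<^esub> x)"
  using assms(1,2)
proof (induction B rule: finite_induct)
  case empty then show ?case using assms(3) by simp
next
  case (insert b B)
  then show ?case using assms(3) by (simp add: Pi_def smult_l_distr R.finsum_closed)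
qed

section \<open>Projectivity from a splitting\<close>

definition trunc :: "'a ring \<Rightarrow> (nat \<Rightarrow> 'a) \<Rightarrow> nat \<Rightarrow> nat \<Rightarrow> 'a" where
  "trunc R c k n = (if n < k then c n else \<zero>\<^bsub>R\<^esub>)"

locale loc_presentation = localization R S F for R :: "'a ring" (structure) and S and F :: "('a, 'b) module" +
  fixes g :: "nat \<Rightarrow> 'b" and kg :: "nat \<Rightarrow> nat \<Rightarrow> 'a" and L :: "nat \<Rightarrow> nat"
  assumes gen: "generated_by R F g"
    and kgen: "generated_by R (relation_module R F g) kg"
    and kg_beyond: "\<And>j n. L j \<le> n \<Longrightarrow> kg j n = \<zero>"
begin

lemma g_car: "g n \<in> carrier F" using gen unfolding generated_by_def by auto

definition gen_comb where "gen_comb c k = finsum F (\<lambda>i. c i \<odot>\<^bsub>F\<^esub> g i) {..<k}"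

lemma gen_comb_ex: "x \<in> carrier F \<Longrightarrow> \<exists>c k. (\<forall>i. c i \<in> carrier R) \<and> x = gen_comb c k"
  using gen unfolding generated_by_def gen_comb_def by blast

lemma gen_comb_closed: "(\<And>i. c i \<in> carrier R) \<Longrightarrow> gen_comb c k \<in> carrier F"
  unfolding gen_comb_def by (rule finsum_closed) (auto intro!: g_car)

sublocale RL: generated_module R F g by (unfold_locales) (simp_all add: M g_car)

lemma kg_in_RelM: "kg j \<in> carrier RL.RelM" using kgen unfolding generated_by_def by auto

lemma kg_closed: "kg j n \<in> carrier R"
  using kg_in_RelM[of j] RL.FR.FM_val' by (simp add: RL.RelM_carrier)

lemma kgen_ex: "c \<in> carrier RL.RelM \<Longrightarrow> \<exists>r l. (\<forall>i. r i \<in> carrier R) \<and> c = finsum RL.RelM (\<lambda>i. r i \<odot>\<^bsub>RL.RelM\<^esub> kg i) {..<l}"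
  using kgen unfolding generated_by_def by blast

lemma LR_cring: "cring LR" by (rule loc_ring_cring[OF is_cring S])

sublocale LR: cring LR by (rule LR_cring)
sublocale LA: abelian_group LM by (rule LM_abelian_group)
sublocale LMm: module LR LM by (rule loc_module_module[OF M S])

definition G where "G m = cls (g m) \<one>"

lemma G_in: "G m \<in> carrier LM" unfolding G_def by (rule cls_in[OF g_car one_S])

end

text \<open>In the free module on the carrier of \<open>S\<inverse>F\<close>, with \<open>E m\<close> the basis vector at \<open>G m = g\<^sub>m/1\<close>,
  the prospective section maps \<open>G n\<close> to \<open>sect_gen n = \<Sum>m<K n. (a n m / d n m) E m\<close>.\<close>

locale loc_splitting = loc_presentation R S F g kg L
  for R :: "'a ring" (structure) and S and F :: "('a, 'b) module" and g kg L +
  fixes K :: "nat \<Rightarrow> nat" and a :: "nat \<Rightarrow> nat \<Rightarrow> 'a" and d :: "nat \<Rightarrow> nat \<Rightarrow> 'a"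
  assumes a_car: "\<And>n m. a n m \<in> carrier R" and d_S: "\<And>n m. d n m \<in> S"
    and a_out: "\<And>n m. K n \<le> m \<Longrightarrow> a n m = \<zero>"
    and retract_gen: "\<And>n. finsum LM (\<lambda>m. cls (a n m \<odot>\<^bsub>F\<^esub> g m) (d n m)) {..<K n} = cls (g n) \<one>"
    and relations_vanish: "\<And>j m. finsum LR (\<lambda>n. clsR (kg j n \<otimes> a n m) (d n m)) {..<L j} = \<zero>\<^bsub>LR\<^esub>"
begin

sublocale X: free_module_cring LR "carrier LM" unfolding free_module_cring_def by (rule LR_cring)

definition E where "E m = X.basis (G m)"
definition sect_gen where "sect_gen n = finsum X.FM (\<lambda>m. clsR (a n m) (d n m) \<odot>\<^bsub>X.FM\<^esub> E m) {..<K n}"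
definition proj where "proj f = finsum LM (\<lambda>i. f i \<odot>\<^bsub>LM\<^esub> i) {i \<in> carrier LM. f i \<noteq> \<zero>\<^bsub>LR\<^esub>}"
definition sect_comb where "sect_comb c k = finsum X.FM (\<lambda>n. clsR (c n) \<one> \<odot>\<^bsub>X.FM\<^esub> sect_gen n) {..<k}"
lemma E_in: "E m \<in> carrier X.FM" unfolding E_def by (rule X.basis_closed[OF G_in])
lemma ad_in: "clsR (a n m) (d n m) \<in> carrier LR" by (rule clsR_in[OF a_car d_S])
lemma sect_gen_closed: "sect_gen n \<in> carrier X.FM"
  unfolding sect_gen_def by (rule X.F.finsum_closed) (auto intro!: X.FM_smult_closed ad_in E_in)
lemma sect_comb_closed: "(\<And>i. c i \<in> carrier R) \<Longrightarrow> sect_comb c k \<in> carrier X.FM"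
  unfolding sect_comb_def by (rule X.F.finsum_closed) (auto intro!: X.FM_smult_closed clsR_in one_S sect_gen_closed)
lemma gen_comb_closed: "(\<And>i. c i \<in> carrier R) \<Longrightarrow> gen_comb c k \<in> carrier F"
  unfolding gen_comb_def by (rule finsum_closed) (auto intro!: g_car)

lemma proj_sum:
  assumes "f \<in> carrier X.FM" "finite B" "B \<subseteq> carrier LM" "{i \<in> carrier LM. f i \<noteq> \<zero>\<^bsub>LR\<^esub>} \<subseteq> B"
  shows "proj f = finsum LM (\<lambda>i. f i \<odot>\<^bsub>LM\<^esub> i) B"
  unfolding proj_def
  by (rule LA.add.finprod_mono_neutral_cong_left)
     (use assms X.FM_val in \<open>auto intro!: LMm.smult_closed\<close>)

lemma proj_closed: "f \<in> carrier X.FM \<Longrightarrow> proj f \<in> carrier LM"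
  unfolding proj_def by (rule LA.finsum_closed) (auto intro!: LMm.smult_closed X.FM_val)

lemma proj_linear: "linear_map LR X.FM LM proj"
  unfolding linear_map_def
proof (intro conjI ballI)
  show "proj \<in> carrier X.FM \<rightarrow> carrier LM" using proj_closed by auto
next
  fix f h assume f: "f \<in> carrier X.FM" and h: "h \<in> carrier X.FM"
  let ?B = "{i \<in> carrier LM. f i \<noteq> \<zero>\<^bsub>LR\<^esub>} \<union> {i \<in> carrier LM. h i \<noteq> \<zero>\<^bsub>LR\<^esub>}"
  have fin: "finite ?B" using X.FM_fin[OF f] X.FM_fin[OF h] by simp
  have fh: "f \<oplus>\<^bsub>X.FM\<^esub> h \<in> carrier X.FM" using f h by (rule X.FM_add_closed)
  have "proj (f \<oplus>\<^bsub>X.FM\<^esub> h) = finsum LM (\<lambda>i. (f \<oplus>\<^bsub>X.FM\<^esub> h) i \<odot>\<^bsub>LM\<^esub> i) ?B"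
    by (rule proj_sum[OF fh fin]) (auto simp: X.FM_simps)
  also have "\<dots> = finsum LM (\<lambda>i. f i \<odot>\<^bsub>LM\<^esub> i \<oplus>\<^bsub>LM\<^esub> h i \<odot>\<^bsub>LM\<^esub> i) ?B"
    by (rule LA.finsum_cong') (use f h in \<open>auto simp: X.FM_simps X.FM_val LMm.smult_l_distr\<close>)
  also have "\<dots> = finsum LM (\<lambda>i. f i \<odot>\<^bsub>LM\<^esub> i) ?B \<oplus>\<^bsub>LM\<^esub> finsum LM (\<lambda>i. h i \<odot>\<^bsub>LM\<^esub> i) ?B"
    by (rule LA.finsum_addf) (use f h X.FM_val in \<open>auto intro!: LMm.smult_closed\<close>)
  also have "\<dots> = proj f \<oplus>\<^bsub>LM\<^esub> proj h"
    using proj_sum[OF f fin] proj_sum[OF h fin] by auto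
  finally show "proj (f \<oplus>\<^bsub>X.FM\<^esub> h) = proj f \<oplus>\<^bsub>LM\<^esub> proj h" .
next
  fix b f assume b: "b \<in> carrier LR" and f: "f \<in> carrier X.FM"
  let ?B = "{i \<in> carrier LM. f i \<noteq> \<zero>\<^bsub>LR\<^esub>}"
  have fin: "finite ?B" using X.FM_fin[OF f] by simp
  have bf: "b \<odot>\<^bsub>X.FM\<^esub> f \<in> carrier X.FM" using b f by (rule X.FM_smult_closed)
  have "proj (b \<odot>\<^bsub>X.FM\<^esub> f) = finsum LM (\<lambda>i. (b \<odot>\<^bsub>X.FM\<^esub> f) i \<odot>\<^bsub>LM\<^esub> i) ?B"
    by (rule proj_sum[OF bf fin]) (use b in \<open>auto simp: X.FM_simps\<close>)
  also have "\<dots> = finsum LM (\<lambda>i. b \<odot>\<^bsub>LM\<^esub> (f i \<odot>\<^bsub>LM\<^esub> i)) ?B"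
    by (rule LA.finsum_cong') (use f b in \<open>auto simp: X.FM_simps X.FM_val LMm.smult_assoc1\<close>)
  also have "\<dots> = b \<odot>\<^bsub>LM\<^esub> proj f"
    unfolding proj_def by (rule LMm.finsum_smult_ldistr[symmetric]) (use fin b f X.FM_val in \<open>auto intro!: LMm.smult_closed\<close>)
  finally show "proj (b \<odot>\<^bsub>X.FM\<^esub> f) = b \<odot>\<^bsub>LM\<^esub> proj f" .
qed

lemma proj_E: "proj (E m) = G m"
proof -
  have "proj (E m) = finsum LM (\<lambda>i. E m i \<odot>\<^bsub>LM\<^esub> i) {G m}"
    by (rule proj_sum[OF E_in]) (auto simp: G_in E_def X.basis_def)
  also have "\<dots> = G m" using G_in by (simp add: E_def X.basis_def)
  finally show ?thesis .
qed

lemma proj_sect_gen: "proj (sect_gen n) = G n"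
proof -
  have "proj (sect_gen n) = finsum LM (\<lambda>m. proj (clsR (a n m) (d n m) \<odot>\<^bsub>X.FM\<^esub> E m)) {..<K n}"
    unfolding sect_gen_def
    by (rule linear_map_finsum[OF X.FM_module loc_module_module[OF M S] proj_linear])
       (auto intro!: X.FM_smult_closed ad_in E_in)
  also have "\<dots> = finsum LM (\<lambda>m. cls (a n m \<odot>\<^bsub>F\<^esub> g m) (d n m)) {..<K n}"
  proof (rule LA.finsum_cong')
    fix m assume "m \<in> {..<K n}"
    have "proj (clsR (a n m) (d n m) \<odot>\<^bsub>X.FM\<^esub> E m) = clsR (a n m) (d n m) \<odot>\<^bsub>LM\<^esub> G m"
      using linear_map_smult[OF proj_linear ad_in E_in] proj_E by simp
    also have "\<dots> = cls (a n m \<odot>\<^bsub>F\<^esub> g m) (d n m)"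
      unfolding G_def using cls_smult[OF a_car g_car d_S one_S] d_S S_car by simp
    finally show "proj (clsR (a n m) (d n m) \<odot>\<^bsub>X.FM\<^esub> E m) = cls (a n m \<odot>\<^bsub>F\<^esub> g m) (d n m)" .
  qed (auto intro!: cls_in smult_closed a_car g_car d_S)
  also have "\<dots> = G n" unfolding G_def by (rule retract_gen)
  finally show ?thesis .
qed

lemma gen_comb_cong: "(\<And>n. n < k \<Longrightarrow> c n = e n) \<Longrightarrow> (\<And>i. e i \<in> carrier R) \<Longrightarrow> gen_comb c k = gen_comb e k"
  unfolding gen_comb_def by (rule M.finsum_cong') (auto intro!: g_car)

lemma sect_comb_cong: "(\<And>n. n < k \<Longrightarrow> c n = e n) \<Longrightarrow> (\<And>i. e i \<in> carrier R) \<Longrightarrow> sect_comb c k = sect_comb e k"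
  unfolding sect_comb_def by (rule X.F.finsum_cong') (auto intro!: X.FM_smult_closed clsR_in one_S sect_gen_closed)

lemma gen_comb_extend:
  assumes "\<And>i. c i \<in> carrier R" "k \<le> k'" "\<And>n. k \<le> n \<Longrightarrow> n < k' \<Longrightarrow> c n = \<zero>"
  shows "gen_comb c k' = gen_comb c k"
  unfolding gen_comb_def
  by (rule M.add.finprod_mono_neutral_cong_right) (use assms in \<open>auto intro!: g_car simp: g_car\<close>)

lemma sect_comb_extend:
  assumes "\<And>i. c i \<in> carrier R" "k \<le> k'" "\<And>n. k \<le> n \<Longrightarrow> n < k' \<Longrightarrow> c n = \<zero>"
  shows "sect_comb c k' = sect_comb c k"
  unfolding sect_comb_def
  by (rule X.F.add.finprod_mono_neutral_cong_right)
     (use assms in \<open>auto intro!: X.FM_smult_closed clsR_in one_S sect_gen_closed simp: clsR_zero one_S sect_gen_closed\<close>)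

lemma gen_comb_add: "(\<And>i. c i \<in> carrier R) \<Longrightarrow> (\<And>i. e i \<in> carrier R) \<Longrightarrow>
   gen_comb (\<lambda>n. c n \<oplus> e n) k = gen_comb c k \<oplus>\<^bsub>F\<^esub> gen_comb e k"
  unfolding gen_comb_def
  by (subst M.finsum_addf[symmetric]) (auto intro!: M.finsum_cong' g_car simp: smult_l_distr g_car)

lemma gen_comb_smult: "(\<And>i. c i \<in> carrier R) \<Longrightarrow> b \<in> carrier R \<Longrightarrow>
   gen_comb (\<lambda>n. b \<otimes> c n) k = b \<odot>\<^bsub>F\<^esub> gen_comb c k"
  unfolding gen_comb_def
  by (subst finsum_smult_ldistr) (auto intro!: M.finsum_cong' g_car simp: smult_assoc1 g_car)

lemma sect_comb_add: "(\<And>i. c i \<in> carrier R) \<Longrightarrow> (\<And>i. e i \<in> carrier R) \<Longrightarrow>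
   sect_comb (\<lambda>n. c n \<oplus> e n) k = sect_comb c k \<oplus>\<^bsub>X.FM\<^esub> sect_comb e k"
  unfolding sect_comb_def
  by (subst X.F.finsum_addf[symmetric])
     (auto intro!: X.F.finsum_cong' X.FM_smult_closed clsR_in one_S sect_gen_closed simp: clsR_one_add X.F.smult_l_distr clsR_in one_S sect_gen_closed)

lemma sect_comb_smult: "(\<And>i. c i \<in> carrier R) \<Longrightarrow> b \<in> carrier R \<Longrightarrow>
   sect_comb (\<lambda>n. b \<otimes> c n) k = clsR b \<one> \<odot>\<^bsub>X.FM\<^esub> sect_comb c k"
  unfolding sect_comb_def
  by (subst X.F.finsum_smult_ldistr)
     (auto intro!: X.F.finsum_cong' X.FM_smult_closed clsR_in one_S sect_gen_closed simp: clsR_one_mult X.F.smult_assoc1 clsR_in one_S sect_gen_closed)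

lemma sect_comb_zero: "sect_comb (\<lambda>n. \<zero>) k = \<zero>\<^bsub>X.FM\<^esub>"
  unfolding sect_comb_def
  by (rule X.F.add.finprod_one_eqI) (simp add: clsR_zero one_S sect_gen_closed)

lemma sect_gen_extend:
  assumes "K n \<le> N"
  shows "sect_gen n = finsum X.FM (\<lambda>m. clsR (a n m) (d n m) \<odot>\<^bsub>X.FM\<^esub> E m) {..<N}"
  unfolding sect_gen_def
  by (rule X.F.add.finprod_mono_neutral_cong_left)
     (use assms a_out in \<open>auto intro!: X.FM_smult_closed ad_in E_in simp: clsR_zero d_S E_in\<close>)

lemma smult_sect_gen:
  assumes b: "b \<in> carrier R" and N: "K n \<le> N"
  shows "clsR b \<one> \<odot>\<^bsub>X.FM\<^esub> sect_gen n = (\<Oplus>\<^bsub>X.FM\<^esub>m\<in>{..<N}. clsR (b \<otimes> a n m) (d n m) \<odot>\<^bsub>X.FM\<^esub> E m)"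
proof -
  have "clsR b \<one> \<odot>\<^bsub>X.FM\<^esub> sect_gen n =
      (\<Oplus>\<^bsub>X.FM\<^esub>m\<in>{..<N}. clsR b \<one> \<odot>\<^bsub>X.FM\<^esub> (clsR (a n m) (d n m) \<odot>\<^bsub>X.FM\<^esub> E m))"
    unfolding sect_gen_extend[OF N]
    by (rule X.F.finsum_smult_ldistr) (auto intro!: X.FM_smult_closed ad_in E_in clsR_in b one_S)
  also have "\<dots> = (\<Oplus>\<^bsub>X.FM\<^esub>m\<in>{..<N}. clsR (b \<otimes> a n m) (d n m) \<odot>\<^bsub>X.FM\<^esub> E m)"
  proof (rule X.F.finsum_cong')
    fix m
    have "clsR b \<one> \<odot>\<^bsub>X.FM\<^esub> (clsR (a n m) (d n m) \<odot>\<^bsub>X.FM\<^esub> E m) =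
        (clsR b \<one> \<otimes>\<^bsub>LR\<^esub> clsR (a n m) (d n m)) \<odot>\<^bsub>X.FM\<^esub> E m"
      by (rule X.F.smult_assoc1[symmetric]) (auto intro!: ad_in E_in clsR_in b one_S)
    also have "clsR b \<one> \<otimes>\<^bsub>LR\<^esub> clsR (a n m) (d n m) = clsR (b \<otimes> a n m) (d n m)"
      using LR_mult[OF b a_car one_S d_S] d_S S_car by simp
    finally show "clsR b \<one> \<odot>\<^bsub>X.FM\<^esub> (clsR (a n m) (d n m) \<odot>\<^bsub>X.FM\<^esub> E m) =
        clsR (b \<otimes> a n m) (d n m) \<odot>\<^bsub>X.FM\<^esub> E m" .
  qed (auto intro!: X.FM_smult_closed clsR_in E_in b a_car d_S)
  finally show ?thesis .
qed

lemma sect_comb_relation: "sect_comb (kg j) (L j) = \<zero>\<^bsub>X.FM\<^esub>"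
proof -
  define N where "N = (\<Sum>n<L j. K n)"
  have KN: "n < L j \<Longrightarrow> K n \<le> N" for n
    unfolding N_def by (rule member_le_sum) auto
  let ?T = "\<lambda>n m. clsR (kg j n \<otimes> a n m) (d n m) \<odot>\<^bsub>X.FM\<^esub> E m"
  have T_in: "?T n m \<in> carrier X.FM" for n m
    by (auto intro!: X.FM_smult_closed clsR_in E_in kg_closed a_car d_S)
  have "sect_comb (kg j) (L j) = (\<Oplus>\<^bsub>X.FM\<^esub>n\<in>{..<L j}. \<Oplus>\<^bsub>X.FM\<^esub>m\<in>{..<N}. ?T n m)"
    unfolding sect_comb_def
  proof (rule X.F.finsum_cong')
    fix n assume "n \<in> {..<L j}"
    then show "clsR (kg j n) \<one> \<odot>\<^bsub>X.FM\<^esub> sect_gen n = (\<Oplus>\<^bsub>X.FM\<^esub>m\<in>{..<N}. ?T n m)"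
      by (intro smult_sect_gen kg_closed KN) simp
  qed (auto intro!: X.F.finsum_closed T_in)
  also have "\<dots> = (\<Oplus>\<^bsub>X.FM\<^esub>m\<in>{..<N}. \<Oplus>\<^bsub>X.FM\<^esub>n\<in>{..<L j}. ?T n m)"
    by (rule X.F.finsum_swap) (auto intro: T_in)
  also have "\<dots> = (\<Oplus>\<^bsub>X.FM\<^esub>m\<in>{..<N}. \<zero>\<^bsub>X.FM\<^esub>)"
  proof (rule X.F.finsum_cong')
    fix m
    have "(\<Oplus>\<^bsub>X.FM\<^esub>n\<in>{..<L j}. ?T n m) = finsum LR (\<lambda>n. clsR (kg j n \<otimes> a n m) (d n m)) {..<L j} \<odot>\<^bsub>X.FM\<^esub> E m"
      by (rule X.F.finsum_smult_rdistr[symmetric]) (auto intro!: clsR_in kg_closed a_car d_S E_in)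
    also have "\<dots> = \<zero>\<^bsub>X.FM\<^esub>" using relations_vanish E_in by simp
    finally show "(\<Oplus>\<^bsub>X.FM\<^esub>n\<in>{..<L j}. ?T n m) = \<zero>\<^bsub>X.FM\<^esub>" .
  qed auto
  also have "\<dots> = \<zero>\<^bsub>X.FM\<^esub>" by simp
  finally show ?thesis .
qed

lemma trunc_val: "(\<And>i. c i \<in> carrier R) \<Longrightarrow> trunc R c k n \<in> carrier R"
  by (simp add: trunc_def)

lemma gen_comb_trunc: "(\<And>i. c i \<in> carrier R) \<Longrightarrow> k \<le> N \<Longrightarrow> gen_comb (trunc R c k) N = gen_comb c k"
proof -
  assume c: "\<And>i. c i \<in> carrier R" and kN: "k \<le> N"
  have "gen_comb (trunc R c k) N = gen_comb (trunc R c k) k"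
    by (rule gen_comb_extend) (use c kN in \<open>auto simp: trunc_def\<close>)
  also have "\<dots> = gen_comb c k" by (rule gen_comb_cong) (use c in \<open>auto simp: trunc_def\<close>)
  finally show ?thesis .
qed

lemma sect_comb_trunc: "(\<And>i. c i \<in> carrier R) \<Longrightarrow> k \<le> N \<Longrightarrow> sect_comb (trunc R c k) N = sect_comb c k"
proof -
  assume c: "\<And>i. c i \<in> carrier R" and kN: "k \<le> N"
  have "sect_comb (trunc R c k) N = sect_comb (trunc R c k) k"
    by (rule sect_comb_extend) (use c kN in \<open>auto simp: trunc_def\<close>)
  also have "\<dots> = sect_comb c k" by (rule sect_comb_cong) (use c in \<open>auto simp: trunc_def\<close>)
  finally show ?thesis .
qed

lemma gen_comb_scaled_trunc:
  "(\<And>i. c i \<in> carrier R) \<Longrightarrow> b \<in> carrier R \<Longrightarrow> k \<le> N \<Longrightarrow>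
   gen_comb (\<lambda>n. b \<otimes> trunc R c k n) N = b \<odot>\<^bsub>F\<^esub> gen_comb c k"
  using gen_comb_smult[of "trunc R c k" b N] gen_comb_trunc[of c k N] by (simp add: trunc_val)

lemma sect_comb_scaled_trunc:
  "(\<And>i. c i \<in> carrier R) \<Longrightarrow> b \<in> carrier R \<Longrightarrow> k \<le> N \<Longrightarrow>
   sect_comb (\<lambda>n. b \<otimes> trunc R c k n) N = clsR b \<one> \<odot>\<^bsub>X.FM\<^esub> sect_comb c k"
  using sect_comb_smult[of "trunc R c k" b N] sect_comb_trunc[of c k N] by (simp add: trunc_val)

lemma sect_comb_relation_comb:
  fixes r :: "nat \<Rightarrow> 'a"
  assumes r: "\<And>j. r j \<in> carrier R"
  shows "sect_comb (\<lambda>n. \<Oplus>j\<in>{..<l}. r j \<otimes> kg j n) N = finsum X.FM (\<lambda>j. clsR (r j) \<one> \<odot>\<^bsub>X.FM\<^esub> sect_comb (kg j) N) {..<l}"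
proof (induction l)
  case 0 show ?case by (simp add: sect_comb_zero)
next
  case (Suc l)
  have kv: "\<And>j n. kg j n \<in> carrier R" by (rule kg_closed)
  have "sect_comb (\<lambda>n. \<Oplus>j\<in>{..<Suc l}. r j \<otimes> kg j n) N = sect_comb (\<lambda>n. r l \<otimes> kg l n \<oplus> (\<Oplus>j\<in>{..<l}. r j \<otimes> kg j n)) N"
    by (rule sect_comb_cong) (use r kv in \<open>auto simp: lessThan_Suc finsum_insert Pi_def\<close>)
  also have "\<dots> = sect_comb (\<lambda>n. r l \<otimes> kg l n) N \<oplus>\<^bsub>X.FM\<^esub> sect_comb (\<lambda>n. \<Oplus>j\<in>{..<l}. r j \<otimes> kg j n) N"
    by (rule sect_comb_add) (use r kv in \<open>auto intro!: finsum_closed\<close>)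
  also have "\<dots> = clsR (r l) \<one> \<odot>\<^bsub>X.FM\<^esub> sect_comb (kg l) N \<oplus>\<^bsub>X.FM\<^esub> finsum X.FM (\<lambda>j. clsR (r j) \<one> \<odot>\<^bsub>X.FM\<^esub> sect_comb (kg j) N) {..<l}"
    using sect_comb_smult[of "kg l" "r l" N] r kv Suc.IH by simp
  also have "\<dots> = finsum X.FM (\<lambda>j. clsR (r j) \<one> \<odot>\<^bsub>X.FM\<^esub> sect_comb (kg j) N) {..<Suc l}"
    unfolding lessThan_Suc
    by (rule X.F.finsum_insert[symmetric]) (use r kv in \<open>auto intro!: X.FM_smult_closed clsR_in one_S sect_comb_closed\<close>)
  finally show ?case .
qed

text \<open>A combination of the generators vanishing in \<open>F\<close> is a combination of the relations, which the
  section kills; this makes \<open>sect\<close> below independent of the chosen representatives.\<close>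

lemma vanishing_gen_comb_relation_comb:
  assumes c: "\<And>i. c i \<in> carrier R" and z: "gen_comb c k = \<zero>\<^bsub>F\<^esub>"
  obtains r l where "\<And>j. r j \<in> carrier R" "\<And>n. trunc R c k n = (\<Oplus>j\<in>{..<l}. r j \<otimes> kg j n)"
proof -
  define ch where "ch = trunc R c k"
  have chv: "ch i \<in> carrier R" for i unfolding ch_def by (rule trunc_val[OF c])
  have sub: "{i. ch i \<noteq> \<zero>} \<subseteq> {..<k}" by (auto simp: ch_def trunc_def)
  have chFR: "ch \<in> carrier RL.FR.FM"
    unfolding RL.FR.FM_carrier using chv sub by (auto intro: finite_subset)
  have "eval_map R F g ch = gen_comb ch k"
    unfolding gen_comb_def by (rule RL.eval_map_sum[OF chFR _ sub]) simp
  also have "\<dots> = gen_comb c k" unfolding ch_def by (rule gen_comb_trunc[OF c]) simp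
  finally have "ch \<in> carrier RL.RelM" using chFR z by (simp add: RL.RelM_carrier)
  then obtain r l where r: "\<And>i. r i \<in> carrier R"
    and chr: "ch = finsum RL.RelM (\<lambda>i. r i \<odot>\<^bsub>RL.RelM\<^esub> kg i) {..<l}"
    using kgen_ex by blast
  have "ch n = (\<Oplus>j\<in>{..<l}. r j \<otimes> kg j n)" for n
    using RL.RelM_finsum_pointwise[of r kg l n] r kg_in_RelM chr by simp
  then show thesis using r unfolding ch_def by (intro that)
qed

lemma sect_comb_vanishes:
  assumes c: "\<And>i. c i \<in> carrier R" and z: "gen_comb c k = \<zero>\<^bsub>F\<^esub>"
  shows "sect_comb c k = \<zero>\<^bsub>X.FM\<^esub>"
proof -
  obtain r l where r: "\<And>j. r j \<in> carrier R"
    and ch: "\<And>n. trunc R c k n = (\<Oplus>j\<in>{..<l}. r j \<otimes> kg j n)"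
    using vanishing_gen_comb_relation_comb[OF c z] by blast
  define N where "N = k + (\<Sum>j<l. L j)"
  have LN: "L j \<le> N" if "j < l" for j
    using member_le_sum[of j "{..<l}" L] that unfolding N_def by simp
  have "sect_comb c k = sect_comb (trunc R c k) N" by (rule sect_comb_trunc[OF c, symmetric]) (simp add: N_def)
  also have "\<dots> = sect_comb (\<lambda>n. \<Oplus>j\<in>{..<l}. r j \<otimes> kg j n) N"
    by (rule sect_comb_cong) (use ch r kg_closed in \<open>auto intro!: finsum_closed\<close>)
  also have "\<dots> = finsum X.FM (\<lambda>j. clsR (r j) \<one> \<odot>\<^bsub>X.FM\<^esub> sect_comb (kg j) N) {..<l}"
    by (rule sect_comb_relation_comb[OF r])
  also have "\<dots> = finsum X.FM (\<lambda>j. \<zero>\<^bsub>X.FM\<^esub>) {..<l}"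
  proof (rule X.F.finsum_cong')
    fix j assume j: "j \<in> {..<l}"
    have "sect_comb (kg j) N = sect_comb (kg j) (L j)"
      by (rule sect_comb_extend) (use LN j kg_beyond kg_closed in auto)
    then show "clsR (r j) \<one> \<odot>\<^bsub>X.FM\<^esub> sect_comb (kg j) N = \<zero>\<^bsub>X.FM\<^esub>"
      using sect_comb_relation r clsR_in one_S by simp
  qed auto
  also have "\<dots> = \<zero>\<^bsub>X.FM\<^esub>" by simp
  finally show ?thesis .
qed

lemma sect_comb_eq:
  assumes c: "\<And>i. c i \<in> carrier R" and e: "\<And>i. e i \<in> carrier R" and eq: "gen_comb c k = gen_comb e k"
  shows "sect_comb c k = sect_comb e k"
proof -
  define dl where "dl n = c n \<ominus> e n" for n
  have dlv: "dl i \<in> carrier R" for i using c e by (simp add: dl_def)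
  have dle: "dl n \<oplus> e n = c n" for n
    using c[of n] e[of n] by (simp add: dl_def a_minus_def R.a_assoc R.l_neg)
  have "gen_comb dl k \<oplus>\<^bsub>F\<^esub> gen_comb e k = gen_comb (\<lambda>n. dl n \<oplus> e n) k" by (rule gen_comb_add[symmetric]) (use dlv e in auto)
  also have "\<dots> = gen_comb c k" by (simp add: dle)
  finally have "gen_comb dl k \<oplus>\<^bsub>F\<^esub> gen_comb e k = gen_comb e k" using eq by simp
  then have "gen_comb dl k = \<zero>\<^bsub>F\<^esub>" using gen_comb_closed[OF dlv] gen_comb_closed[OF e] by simp
  then have z: "sect_comb dl k = \<zero>\<^bsub>X.FM\<^esub>" by (rule sect_comb_vanishes[OF dlv])
  have "sect_comb c k = sect_comb (\<lambda>n. dl n \<oplus> e n) k" by (simp add: dle)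
  also have "\<dots> = sect_comb dl k \<oplus>\<^bsub>X.FM\<^esub> sect_comb e k" by (rule sect_comb_add) (use dlv e in auto)
  also have "\<dots> = sect_comb e k" using z sect_comb_closed[OF e] by simp
  finally show ?thesis .
qed

lemma clsR_one_mult_cancel: "p \<in> S \<Longrightarrow> q \<in> S \<Longrightarrow> clsR \<one> (p \<otimes> q) \<otimes>\<^bsub>LR\<^esub> clsR q \<one> = clsR \<one> p"
  by (simp add: LR_mult S_car S_mult one_S, rule localization.cls_eqI[OF ring_localization]) (simp_all add: S_car S_mult one_S m_ac)

definition sect where
  "sect Y = (let r = loc_rep Y;
               ck = (SOME ck. (\<forall>i. fst ck i \<in> carrier R) \<and> fst r = gen_comb (fst ck) (snd ck))
           in clsR \<one> (snd r) \<odot>\<^bsub>X.FM\<^esub> sect_comb (fst ck) (snd ck))"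

lemma smult_clear_denominators:
  assumes u: "u \<in> S" and t: "t \<in> S" and t': "t' \<in> S"
    and v: "v \<in> carrier X.FM" and v': "v' \<in> carrier X.FM"
    and eq: "clsR (u \<otimes> t') \<one> \<odot>\<^bsub>X.FM\<^esub> v = clsR (u \<otimes> t) \<one> \<odot>\<^bsub>X.FM\<^esub> v'"
  shows "clsR \<one> t \<odot>\<^bsub>X.FM\<^esub> v = clsR \<one> t' \<odot>\<^bsub>X.FM\<^esub> v'"
proof -
  define w where "w = clsR \<one> (t \<otimes> (u \<otimes> t'))"
  have ut: "u \<otimes> t \<in> S" "u \<otimes> t' \<in> S" using u t t' S_mult by auto
  have w_in: "w \<in> carrier LR" unfolding w_def by (rule clsR_in) (use t ut S_mult in auto)
  have uc: "u \<in> carrier R" "t \<in> carrier R" "t' \<in> carrier R" using u t t' S_car by auto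
  have "clsR \<one> t \<odot>\<^bsub>X.FM\<^esub> v = (w \<otimes>\<^bsub>LR\<^esub> clsR (u \<otimes> t') \<one>) \<odot>\<^bsub>X.FM\<^esub> v"
    unfolding w_def using clsR_one_mult_cancel[OF t ut(2)] by simp
  also have "\<dots> = w \<odot>\<^bsub>X.FM\<^esub> (clsR (u \<otimes> t) \<one> \<odot>\<^bsub>X.FM\<^esub> v')"
    using w_in ut v by (simp add: X.F.smult_assoc1 clsR_in one_S S_car eq)
  also have "\<dots> = (w \<otimes>\<^bsub>LR\<^esub> clsR (u \<otimes> t) \<one>) \<odot>\<^bsub>X.FM\<^esub> v'"
    using w_in ut v' by (simp add: X.F.smult_assoc1 clsR_in one_S S_car)
  also have "w = clsR \<one> (t' \<otimes> (u \<otimes> t))" unfolding w_def using uc by (simp add: m_ac)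
  also have "clsR \<one> (t' \<otimes> (u \<otimes> t)) \<otimes>\<^bsub>LR\<^esub> clsR (u \<otimes> t) \<one> = clsR \<one> t'"
    by (rule clsR_one_mult_cancel[OF t' ut(1)])
  finally show ?thesis .
qed

lemma sect_cls_well_defined:
  assumes x: "x \<in> carrier F" and x': "x' \<in> carrier F" and t: "t \<in> S" and t': "t' \<in> S"
    and c: "\<And>i. c i \<in> carrier R" and c': "\<And>i. c' i \<in> carrier R"
    and xc: "x = gen_comb c k" and xc': "x' = gen_comb c' k'" and eq: "cls x t = cls x' t'"
  shows "clsR \<one> t \<odot>\<^bsub>X.FM\<^esub> sect_comb c k = clsR \<one> t' \<odot>\<^bsub>X.FM\<^esub> sect_comb c' k'"
proof -
  obtain u where u: "u \<in> S" "(u \<otimes> t') \<odot>\<^bsub>F\<^esub> x = (u \<otimes> t) \<odot>\<^bsub>F\<^esub> x'"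
    using cls_eqD[OF x x' t t' eq] .
  have uc: "u \<otimes> t' \<in> carrier R" "u \<otimes> t \<in> carrier R" using u t t' S_car by auto
  define N where "N = k + k'"
  have "gen_comb (\<lambda>n. (u \<otimes> t') \<otimes> trunc R c k n) N = gen_comb (\<lambda>n. (u \<otimes> t) \<otimes> trunc R c' k' n) N"
    using u(2) unfolding xc xc' N_def
    by (simp only: gen_comb_scaled_trunc[OF c uc(1)] gen_comb_scaled_trunc[OF c' uc(2)] le_add1 le_add2)
  then have "sect_comb (\<lambda>n. (u \<otimes> t') \<otimes> trunc R c k n) N = sect_comb (\<lambda>n. (u \<otimes> t) \<otimes> trunc R c' k' n) N"
    by (rule sect_comb_eq[rotated 2]) (use uc trunc_val[OF c] trunc_val[OF c'] in simp_all)
  then have "clsR (u \<otimes> t') \<one> \<odot>\<^bsub>X.FM\<^esub> sect_comb c k = clsR (u \<otimes> t) \<one> \<odot>\<^bsub>X.FM\<^esub> sect_comb c' k'"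
    unfolding N_def
    by (simp only: sect_comb_scaled_trunc[OF c uc(1)] sect_comb_scaled_trunc[OF c' uc(2)] le_add1 le_add2)
  then show ?thesis
    by (rule smult_clear_denominators[OF u(1) t t' sect_comb_closed[OF c] sect_comb_closed[OF c']])
qed

lemma sect_cls:
  assumes x: "x \<in> carrier F" and t: "t \<in> S" and c: "\<And>i. c i \<in> carrier R" and xc: "x = gen_comb c k"
  shows "sect (cls x t) = clsR \<one> t \<odot>\<^bsub>X.FM\<^esub> sect_comb c k"
proof -
  define r where "r = loc_rep (cls x t)"
  have r: "fst r \<in> carrier F" "snd r \<in> S" "cls (fst r) (snd r) = cls x t"
    using loc_rep_cls[OF x t] unfolding r_def by auto
  define P where "P ck \<longleftrightarrow> (\<forall>i. fst ck i \<in> carrier R) \<and> fst r = gen_comb (fst ck) (snd ck)" for ck :: "(nat \<Rightarrow> 'a) \<times> nat"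
  have "\<exists>ck. P ck" using gen_comb_ex[OF r(1)] unfolding P_def by auto
  then have Pck: "P (SOME ck. P ck)" by (rule someI_ex)
  define ck where "ck = (SOME ck. P ck)"
  have ck: "\<And>i. fst ck i \<in> carrier R" "fst r = gen_comb (fst ck) (snd ck)" using Pck unfolding ck_def P_def by auto
  have "sect (cls x t) = clsR \<one> (snd r) \<odot>\<^bsub>X.FM\<^esub> sect_comb (fst ck) (snd ck)"
    unfolding sect_def Let_def r_def[symmetric] ck_def P_def by simp
  also have "\<dots> = clsR \<one> t \<odot>\<^bsub>X.FM\<^esub> sect_comb c k"
    by (rule sect_cls_well_defined[OF r(1) x r(2) t ck(1) c ck(2) xc r(3)])
  finally show ?thesis .
qed

lemma LM_gen_comb_cases:
  assumes "Y \<in> carrier LM"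
  shows "\<exists>x t c k. x \<in> carrier F \<and> t \<in> S \<and> (\<forall>i. c i \<in> carrier R) \<and> x = gen_comb c k \<and> Y = cls x t"
proof -
  obtain x t where xt: "x \<in> carrier F" "t \<in> S" "Y = cls x t" using assms by (rule LM_cases)
  obtain c k where ck: "\<forall>i. c i \<in> carrier R" "x = gen_comb c k" using gen_comb_ex[OF xt(1)] by blast
  show ?thesis using xt ck by blast
qed

lemma sect_closed: "Y \<in> carrier LM \<Longrightarrow> sect Y \<in> carrier X.FM"
proof -
  assume "Y \<in> carrier LM"
  then obtain x t c k where x: "x \<in> carrier F" "t \<in> S" "\<And>i. c i \<in> carrier R" "x = gen_comb c k" "Y = cls x t"
    using LM_gen_comb_cases[OF \<open>Y \<in> carrier LM\<close>] by blast
  show ?thesis unfolding x(5) sect_cls[OF x(1-4)]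
    by (rule X.FM_smult_closed) (use x sect_comb_closed in \<open>auto intro!: clsR_in simp: one_S\<close>)
qed

lemma sect_add:
  assumes "Y \<in> carrier LM" "Y' \<in> carrier LM"
  shows "sect (Y \<oplus>\<^bsub>LM\<^esub> Y') = sect Y \<oplus>\<^bsub>X.FM\<^esub> sect Y'"
proof -
  obtain x t c k where x: "x \<in> carrier F" "t \<in> S" "\<And>i. c i \<in> carrier R" "x = gen_comb c k" "Y = cls x t"
    using LM_gen_comb_cases[OF assms(1)] by blast
  obtain y t' c' k' where y: "y \<in> carrier F" "t' \<in> S" "\<And>i. c' i \<in> carrier R" "y = gen_comb c' k'" "Y' = cls y t'"
    using LM_gen_comb_cases[OF assms(2)] by blast
  have tc: "t \<in> carrier R" "t' \<in> carrier R" using x y S_car by auto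
  define N where "N = k + k'"
  define C where "C n = t' \<otimes> trunc R c k n \<oplus> t \<otimes> trunc R c' k' n" for n
  have tv: "\<And>i. t' \<otimes> trunc R c k i \<in> carrier R" "\<And>i. t \<otimes> trunc R c' k' i \<in> carrier R"
    using trunc_val x(3) y(3) tc by auto
  have Cv: "C i \<in> carrier R" for i using tv by (simp add: C_def)
  have "t' \<odot>\<^bsub>F\<^esub> x \<oplus>\<^bsub>F\<^esub> t \<odot>\<^bsub>F\<^esub> y = gen_comb C N"
    unfolding C_def gen_comb_add[OF tv] x(4) y(4) N_def
    by (simp only: gen_comb_scaled_trunc[OF x(3) tc(2)] gen_comb_scaled_trunc[OF y(3) tc(1)] le_add1 le_add2)
  then have YY: "Y \<oplus>\<^bsub>LM\<^esub> Y' = cls (gen_comb C N) (t \<otimes> t')"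
    using cls_add x y by simp
  have "sect_comb C N = clsR t' \<one> \<odot>\<^bsub>X.FM\<^esub> sect_comb c k \<oplus>\<^bsub>X.FM\<^esub> clsR t \<one> \<odot>\<^bsub>X.FM\<^esub> sect_comb c' k'"
    unfolding C_def sect_comb_add[OF tv] N_def
    by (simp only: sect_comb_scaled_trunc[OF x(3) tc(2)] sect_comb_scaled_trunc[OF y(3) tc(1)] le_add1 le_add2)
  moreover have "sect (Y \<oplus>\<^bsub>LM\<^esub> Y') = clsR \<one> (t \<otimes> t') \<odot>\<^bsub>X.FM\<^esub> sect_comb C N"
    unfolding YY using x(2) y(2) S_mult by (intro sect_cls[OF gen_comb_closed[OF Cv] _ Cv refl]) simp
  ultimately have "sect (Y \<oplus>\<^bsub>LM\<^esub> Y') = (clsR \<one> (t \<otimes> t') \<otimes>\<^bsub>LR\<^esub> clsR t' \<one>) \<odot>\<^bsub>X.FM\<^esub> sect_comb c k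
      \<oplus>\<^bsub>X.FM\<^esub> (clsR \<one> (t \<otimes> t') \<otimes>\<^bsub>LR\<^esub> clsR t \<one>) \<odot>\<^bsub>X.FM\<^esub> sect_comb c' k'"
    using x(2,3) y(2,3) tc
    by (simp add: X.F.smult_r_distr X.F.smult_assoc1 sect_comb_closed clsR_in one_S S_mult)
  also have "clsR \<one> (t \<otimes> t') \<otimes>\<^bsub>LR\<^esub> clsR t' \<one> = clsR \<one> t" by (rule clsR_one_mult_cancel[OF x(2) y(2)])
  also have "clsR \<one> (t \<otimes> t') \<otimes>\<^bsub>LR\<^esub> clsR t \<one> = clsR \<one> t'"
    using clsR_one_mult_cancel[OF y(2) x(2)] tc by (simp add: m_comm)
  finally show ?thesis using sect_cls[OF x(1-4)] sect_cls[OF y(1-4)] x(5) y(5) by simp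
qed

lemma sect_smult:
  assumes "B \<in> carrier LR" "Y \<in> carrier LM"
  shows "sect (B \<odot>\<^bsub>LM\<^esub> Y) = B \<odot>\<^bsub>X.FM\<^esub> sect Y"
proof -
  obtain b r where b: "b \<in> carrier R" "r \<in> S" "B = clsR b r" using assms(1) by (rule LR_cases)
  obtain x t c k where x: "x \<in> carrier F" "t \<in> S" "\<And>i. c i \<in> carrier R" "x = gen_comb c k" "Y = cls x t"
    using LM_gen_comb_cases[OF assms(2)] by blast
  have rc: "r \<in> carrier R" "t \<in> carrier R" using b x S_car by auto
  have rt: "r \<otimes> t \<in> S" using b x S_mult by auto
  have V: "sect_comb c k \<in> carrier X.FM" using sect_comb_closed x(3) by auto
  have BY: "B \<odot>\<^bsub>LM\<^esub> Y = cls (b \<odot>\<^bsub>F\<^esub> x) (r \<otimes> t)" using cls_smult b x by simp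
  have bx: "b \<odot>\<^bsub>F\<^esub> x = gen_comb (\<lambda>n. b \<otimes> c n) k" using gen_comb_smult[OF x(3) b(1)] x(4) by simp
  have "sect (B \<odot>\<^bsub>LM\<^esub> Y) = clsR \<one> (r \<otimes> t) \<odot>\<^bsub>X.FM\<^esub> sect_comb (\<lambda>n. b \<otimes> c n) k"
    unfolding BY by (rule sect_cls[OF _ rt _ bx]) (use b x in auto)
  also have "\<dots> = clsR \<one> (r \<otimes> t) \<odot>\<^bsub>X.FM\<^esub> (clsR b \<one> \<odot>\<^bsub>X.FM\<^esub> sect_comb c k)"
    using sect_comb_smult[OF x(3) b(1)] by simp
  also have "\<dots> = (clsR \<one> (r \<otimes> t) \<otimes>\<^bsub>LR\<^esub> clsR b \<one>) \<odot>\<^bsub>X.FM\<^esub> sect_comb c k"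
    by (rule X.F.smult_assoc1[symmetric]) (use rt b V in \<open>auto intro!: clsR_in simp: one_S\<close>)
  also have "clsR \<one> (r \<otimes> t) \<otimes>\<^bsub>LR\<^esub> clsR b \<one> = clsR b r \<otimes>\<^bsub>LR\<^esub> clsR \<one> t"
    using rt b x rc by (simp add: LR_mult one_S)
  also have "(clsR b r \<otimes>\<^bsub>LR\<^esub> clsR \<one> t) \<odot>\<^bsub>X.FM\<^esub> sect_comb c k = clsR b r \<odot>\<^bsub>X.FM\<^esub> (clsR \<one> t \<odot>\<^bsub>X.FM\<^esub> sect_comb c k)"
    by (rule X.F.smult_assoc1) (use b x V in \<open>auto intro!: clsR_in simp: one_S\<close>)
  also have "\<dots> = B \<odot>\<^bsub>X.FM\<^esub> sect Y" using sect_cls[OF x(1,2,3,4)] b x(5) by simp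
  finally show ?thesis .
qed

lemma proj_sect_comb: "(\<And>i. c i \<in> carrier R) \<Longrightarrow> proj (sect_comb c k) = cls (gen_comb c k) \<one>"
proof -
  assume c: "\<And>i. c i \<in> carrier R"
  have "proj (sect_comb c k) = finsum LM (\<lambda>n. proj (clsR (c n) \<one> \<odot>\<^bsub>X.FM\<^esub> sect_gen n)) {..<k}"
    unfolding sect_comb_def
    by (rule linear_map_finsum[OF X.FM_module loc_module_module[OF M S] proj_linear])
       (use c in \<open>auto intro!: X.FM_smult_closed clsR_in one_S sect_gen_closed\<close>)
  also have "\<dots> = finsum LM (\<lambda>n. cls (c n \<odot>\<^bsub>F\<^esub> g n) \<one>) {..<k}"
  proof (rule LA.finsum_cong')
    fix n
    have "proj (clsR (c n) \<one> \<odot>\<^bsub>X.FM\<^esub> sect_gen n) = clsR (c n) \<one> \<odot>\<^bsub>LM\<^esub> G n"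
      using linear_map_smult[OF proj_linear _ sect_gen_closed, of "clsR (c n) \<one>"] proj_sect_gen c clsR_in one_S by simp
    also have "\<dots> = cls (c n \<odot>\<^bsub>F\<^esub> g n) \<one>"
      unfolding G_def using cls_smult[OF c g_car one_S one_S] by simp
    finally show "proj (clsR (c n) \<one> \<odot>\<^bsub>X.FM\<^esub> sect_gen n) = cls (c n \<odot>\<^bsub>F\<^esub> g n) \<one>" .
  qed (use c in \<open>auto intro!: cls_in g_car one_S\<close>)
  also have "\<dots> = cls (gen_comb c k) \<one>"
    unfolding gen_comb_def by (rule cls_one_finsum) (use c in \<open>auto intro!: g_car\<close>)
  finally show ?thesis .
qed

lemma proj_sect: "Y \<in> carrier LM \<Longrightarrow> proj (sect Y) = Y"
proof -
  assume "Y \<in> carrier LM"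
  then obtain x t c k where x: "x \<in> carrier F" "t \<in> S" "\<And>i. c i \<in> carrier R" "x = gen_comb c k" "Y = cls x t"
    using LM_gen_comb_cases[OF \<open>Y \<in> carrier LM\<close>] by blast
  have "proj (sect Y) = proj (clsR \<one> t \<odot>\<^bsub>X.FM\<^esub> sect_comb c k)" using sect_cls[OF x(1-4)] x(5) by simp
  also have "\<dots> = clsR \<one> t \<odot>\<^bsub>LM\<^esub> proj (sect_comb c k)"
    by (rule linear_map_smult[OF proj_linear]) (use x sect_comb_closed in \<open>auto intro!: clsR_in simp: one_S\<close>)
  also have "\<dots> = clsR \<one> t \<odot>\<^bsub>LM\<^esub> cls x \<one>" using proj_sect_comb[OF x(3)] x(4) by simp
  also have "\<dots> = Y" using cls_smult[OF one_closed x(1) x(2) one_S] x S_car by simp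
  finally show ?thesis .
qed

lemma projective_loc_module: "projective LR LM"
  unfolding projective_def
proof (intro conjI exI)
  show "module LR LM" by (rule loc_module_module[OF M S])
  show "carrier LM \<subseteq> carrier LM" by simp
  show "linear_map LR LM X.FM sect"
    unfolding linear_map_def using sect_closed sect_add sect_smult by auto
  show "linear_map LR X.FM LM proj" by (rule proj_linear)
  show "\<forall>x\<in>carrier LM. proj (sect x) = x" using proj_sect by auto
qed

end

section \<open>Splittings from projectivity\<close>

locale loc_section = loc_presentation R S F g kg L
  for R :: "'a ring" (structure) and S and F :: "('a, 'b) module" and g kg L +
  fixes I :: "'i set" and s :: "('b \<times> 'a) set \<Rightarrow> 'i \<Rightarrow> ('a \<times> 'a) set" and p
  assumes s_lin: "linear_map (loc_ring R S) (loc_module R S F) (free_module (loc_ring R S) I) s"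
    and p_lin: "linear_map (loc_ring R S) (free_module (loc_ring R S) I) (loc_module R S F) p"
    and ps: "\<And>x. x \<in> carrier (loc_module R S F) \<Longrightarrow> p (s x) = x"
begin

sublocale Y: free_module_cring LR I unfolding free_module_cring_def by (rule LR_cring)

definition retr_basis where "retr_basis i = p (Y.basis i)"
lemma retr_basis_closed: "i \<in> I \<Longrightarrow> retr_basis i \<in> carrier LM"
  unfolding retr_basis_def by (rule linear_map_closed[OF p_lin Y.basis_closed])

definition retr_basis_choice where "retr_basis_choice i = (SOME q. case q of (t, c, k) \<Rightarrow>
     t \<in> S \<and> (\<forall>m. c m \<in> carrier R) \<and> retr_basis i = cls (gen_comb c k) t)"
definition rep_den where "rep_den i = fst (retr_basis_choice i)"
definition rep_coeff where "rep_coeff i = fst (snd (retr_basis_choice i))"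
definition rep_len where "rep_len i = snd (snd (retr_basis_choice i))"

lemma retr_basis_rep:
  assumes "i \<in> I"
  shows "rep_den i \<in> S" "\<And>m. rep_coeff i m \<in> carrier R" "retr_basis i = cls (gen_comb (rep_coeff i) (rep_len i)) (rep_den i)"
proof -
  obtain x t where xt: "x \<in> carrier F" "t \<in> S" "retr_basis i = cls x t"
    using retr_basis_closed[OF assms] by (rule LM_cases)
  obtain c k where ck: "\<forall>i. c i \<in> carrier R" "x = gen_comb c k" using gen_comb_ex[OF xt(1)] by blast
  have "\<exists>q. case q of (t, c, k) \<Rightarrow> t \<in> S \<and> (\<forall>m. c m \<in> carrier R) \<and> retr_basis i = cls (gen_comb c k) t"
    using xt ck by (intro exI[of _ "(t, c, k)"]) auto
  then have "case retr_basis_choice i of (t, c, k) \<Rightarrow> t \<in> S \<and> (\<forall>m. c m \<in> carrier R) \<and> retr_basis i = cls (gen_comb c k) t"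
    unfolding retr_basis_choice_def by (rule someI_ex)
  then show "rep_den i \<in> S" "\<And>m. rep_coeff i m \<in> carrier R" "retr_basis i = cls (gen_comb (rep_coeff i) (rep_len i)) (rep_den i)"
    unfolding rep_den_def rep_coeff_def rep_len_def by (auto split: prod.splits)
qed

definition retr_coeff where "retr_coeff i m = (if m < rep_len i then clsR (rep_coeff i m) (rep_den i) else \<zero>\<^bsub>LR\<^esub>)"

lemma retr_coeff_closed: "i \<in> I \<Longrightarrow> retr_coeff i m \<in> carrier LR"
  unfolding retr_coeff_def using retr_basis_rep by (auto intro!: clsR_in)

lemma retr_basis_expansion:
  assumes i: "i \<in> I" and N: "rep_len i \<le> N"
  shows "retr_basis i = finsum LM (\<lambda>m. retr_coeff i m \<odot>\<^bsub>LM\<^esub> G m) {..<N}"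
proof -
  note r = retr_basis_rep[OF i]
  have tc: "rep_den i \<in> carrier R" using r S_car by auto
  have "retr_basis i = clsR \<one> (rep_den i) \<odot>\<^bsub>LM\<^esub> cls (gen_comb (rep_coeff i) (rep_len i)) \<one>"
    using r(3) cls_smult[OF one_closed _ r(1) one_S, of "gen_comb (rep_coeff i) (rep_len i)"] r tc
    by (simp add: gen_comb_def finsum_closed g_car Pi_def)
  also have "cls (gen_comb (rep_coeff i) (rep_len i)) \<one> = finsum LM (\<lambda>m. cls (rep_coeff i m \<odot>\<^bsub>F\<^esub> g m) \<one>) {..<rep_len i}"
    unfolding gen_comb_def by (rule cls_one_finsum[symmetric]) (use r in \<open>auto intro!: g_car\<close>)
  also have "clsR \<one> (rep_den i) \<odot>\<^bsub>LM\<^esub> finsum LM (\<lambda>m. cls (rep_coeff i m \<odot>\<^bsub>F\<^esub> g m) \<one>) {..<rep_len i}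
      = finsum LM (\<lambda>m. clsR \<one> (rep_den i) \<odot>\<^bsub>LM\<^esub> cls (rep_coeff i m \<odot>\<^bsub>F\<^esub> g m) \<one>) {..<rep_len i}"
    by (rule LMm.finsum_smult_ldistr) (use r in \<open>auto intro!: cls_in clsR_in g_car one_S\<close>)
  also have "\<dots> = finsum LM (\<lambda>m. retr_coeff i m \<odot>\<^bsub>LM\<^esub> G m) {..<rep_len i}"
  proof (rule LA.finsum_cong')
    fix m assume m: "m \<in> {..<rep_len i}"
    have "clsR \<one> (rep_den i) \<odot>\<^bsub>LM\<^esub> cls (rep_coeff i m \<odot>\<^bsub>F\<^esub> g m) \<one> = cls (rep_coeff i m \<odot>\<^bsub>F\<^esub> g m) (rep_den i)"
      using cls_smult[OF one_closed _ r(1) one_S, of "rep_coeff i m \<odot>\<^bsub>F\<^esub> g m"] r tc g_car by simp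
    also have "\<dots> = retr_coeff i m \<odot>\<^bsub>LM\<^esub> G m"
      unfolding retr_coeff_def G_def using m cls_smult[OF r(2) g_car r(1) one_S] tc by simp
    finally show "clsR \<one> (rep_den i) \<odot>\<^bsub>LM\<^esub> cls (rep_coeff i m \<odot>\<^bsub>F\<^esub> g m) \<one> = retr_coeff i m \<odot>\<^bsub>LM\<^esub> G m" .
  qed (use i retr_coeff_closed G_in in \<open>auto intro!: LMm.smult_closed\<close>)
  also have "\<dots> = finsum LM (\<lambda>m. retr_coeff i m \<odot>\<^bsub>LM\<^esub> G m) {..<N}"
    by (rule LA.add.finprod_mono_neutral_cong_left)
       (use N i retr_coeff_closed G_in in \<open>auto intro!: LMm.smult_closed simp: retr_coeff_def G_in\<close>)
  finally show ?thesis .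
qed

definition sect_gen where "sect_gen n = s (G n)"
lemma sect_gen_closed: "sect_gen n \<in> carrier Y.FM" unfolding sect_gen_def by (rule linear_map_closed[OF s_lin G_in])

definition sect_supp where "sect_supp n = {i \<in> I. sect_gen n i \<noteq> \<zero>\<^bsub>LR\<^esub>}"
lemma sect_supp_finite: "finite (sect_supp n)" unfolding sect_supp_def by (rule Y.FM_fin[OF sect_gen_closed])

definition sect_len where "sect_len n = (\<Sum>i\<in>sect_supp n. rep_len i)"

text \<open>The coefficient of \<open>G m\<close> in \<open>p (s (G n))\<close>, obtained by expanding \<open>s (G n)\<close> in the basis and
  each \<open>p\<close>-image of a basis vector in the generators.\<close>
definition sect_coeff where "sect_coeff n m = finsum LR (\<lambda>i. sect_gen n i \<otimes>\<^bsub>LR\<^esub> retr_coeff i m) (sect_supp n)"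

lemma sect_coeff_closed: "sect_coeff n m \<in> carrier LR"
  unfolding sect_coeff_def by (rule LR.finsum_closed) (auto simp: sect_supp_def intro!: LR.m_closed retr_coeff_closed Y.FM_val[OF sect_gen_closed])

lemma sect_coeff_extend:
  assumes "finite BB" "sect_supp n \<subseteq> BB" "BB \<subseteq> I"
  shows "sect_coeff n m = finsum LR (\<lambda>i. sect_gen n i \<otimes>\<^bsub>LR\<^esub> retr_coeff i m) BB"
  unfolding sect_coeff_def
  by (rule LR.add.finprod_mono_neutral_cong_left)
     (use assms in \<open>auto simp: sect_supp_def retr_coeff_closed intro!: LR.m_closed retr_coeff_closed Y.FM_val[OF sect_gen_closed]\<close>)

lemma sect_coeff_beyond: "sect_len n \<le> m \<Longrightarrow> sect_coeff n m = \<zero>\<^bsub>LR\<^esub>"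
proof -
  assume m: "sect_len n \<le> m"
  have "sect_coeff n m = finsum LR (\<lambda>i. \<zero>\<^bsub>LR\<^esub>) (sect_supp n)"
    unfolding sect_coeff_def
  proof (rule LR.finsum_cong')
    fix i assume i: "i \<in> sect_supp n"
    have "rep_len i \<le> sect_len n" unfolding sect_len_def by (rule member_le_sum[OF i]) (auto simp: sect_supp_finite)
    then have "retr_coeff i m = \<zero>\<^bsub>LR\<^esub>" using m by (simp add: retr_coeff_def)
    then show "sect_gen n i \<otimes>\<^bsub>LR\<^esub> retr_coeff i m = \<zero>\<^bsub>LR\<^esub>"
      using i Y.FM_val[OF sect_gen_closed] by (simp add: sect_supp_def)
  qed auto
  then show ?thesis by simp
qed

lemma G_expansion: "G n = finsum LM (\<lambda>m. sect_coeff n m \<odot>\<^bsub>LM\<^esub> G m) {..<sect_len n}"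
proof -
  have tv: "\<And>i. sect_gen n i \<in> carrier LR" by (rule Y.FM_val'[OF sect_gen_closed])
  have BI: "sect_supp n \<subseteq> I" by (auto simp: sect_supp_def)
  have kK: "i \<in> sect_supp n \<Longrightarrow> rep_len i \<le> sect_len n" for i unfolding sect_len_def by (rule member_le_sum) (auto simp: sect_supp_finite)
  have "G n = p (sect_gen n)" unfolding sect_gen_def using ps[OF G_in] by simp
  also have "sect_gen n = finsum Y.FM (\<lambda>i. sect_gen n i \<odot>\<^bsub>Y.FM\<^esub> Y.basis i) (sect_supp n)"
    by (rule Y.FM_basis_expansion[OF sect_gen_closed sect_supp_finite BI]) (auto simp: sect_supp_def)
  also have "p \<dots> = finsum LM (\<lambda>i. p (sect_gen n i \<odot>\<^bsub>Y.FM\<^esub> Y.basis i)) (sect_supp n)"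
    by (rule linear_map_finsum[OF Y.FM_module loc_module_module[OF M S] p_lin sect_supp_finite])
       (use BI tv in \<open>auto intro!: Y.FM_smult_closed Y.basis_closed\<close>)
  also have "\<dots> = finsum LM (\<lambda>i. \<Oplus>\<^bsub>LM\<^esub>m\<in>{..<sect_len n}. (sect_gen n i \<otimes>\<^bsub>LR\<^esub> retr_coeff i m) \<odot>\<^bsub>LM\<^esub> G m) (sect_supp n)"
  proof (rule LA.finsum_cong')
    fix i assume i: "i \<in> sect_supp n"
    then have iI: "i \<in> I" using BI by auto
    have "p (sect_gen n i \<odot>\<^bsub>Y.FM\<^esub> Y.basis i) = sect_gen n i \<odot>\<^bsub>LM\<^esub> retr_basis i"
      unfolding retr_basis_def by (rule linear_map_smult[OF p_lin tv Y.basis_closed[OF iI]])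
    also have "\<dots> = sect_gen n i \<odot>\<^bsub>LM\<^esub> finsum LM (\<lambda>m. retr_coeff i m \<odot>\<^bsub>LM\<^esub> G m) {..<sect_len n}"
      using retr_basis_expansion[OF iI kK[OF i]] by simp
    also have "\<dots> = (\<Oplus>\<^bsub>LM\<^esub>m\<in>{..<sect_len n}. sect_gen n i \<odot>\<^bsub>LM\<^esub> (retr_coeff i m \<odot>\<^bsub>LM\<^esub> G m))"
      by (rule LMm.finsum_smult_ldistr) (use tv iI retr_coeff_closed G_in in \<open>auto intro!: LMm.smult_closed\<close>)
    also have "\<dots> = (\<Oplus>\<^bsub>LM\<^esub>m\<in>{..<sect_len n}. (sect_gen n i \<otimes>\<^bsub>LR\<^esub> retr_coeff i m) \<odot>\<^bsub>LM\<^esub> G m)"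
      by (rule LA.finsum_cong') (use tv iI retr_coeff_closed G_in in \<open>auto intro!: LMm.smult_closed simp: LMm.smult_assoc1\<close>)
    finally show "p (sect_gen n i \<odot>\<^bsub>Y.FM\<^esub> Y.basis i) = (\<Oplus>\<^bsub>LM\<^esub>m\<in>{..<sect_len n}. (sect_gen n i \<otimes>\<^bsub>LR\<^esub> retr_coeff i m) \<odot>\<^bsub>LM\<^esub> G m)" .
  qed (use tv BI retr_coeff_closed G_in in \<open>auto intro!: LA.finsum_closed LMm.smult_closed\<close>)
  also have "\<dots> = (\<Oplus>\<^bsub>LM\<^esub>m\<in>{..<sect_len n}. \<Oplus>\<^bsub>LM\<^esub>i\<in>sect_supp n. (sect_gen n i \<otimes>\<^bsub>LR\<^esub> retr_coeff i m) \<odot>\<^bsub>LM\<^esub> G m)"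
    by (rule LA.finsum_swap) (use tv BI retr_coeff_closed G_in sect_supp_finite in \<open>auto intro!: LMm.smult_closed\<close>)
  also have "\<dots> = (\<Oplus>\<^bsub>LM\<^esub>m\<in>{..<sect_len n}. sect_coeff n m \<odot>\<^bsub>LM\<^esub> G m)"
  proof (rule LA.finsum_cong')
    fix m
    show "(\<Oplus>\<^bsub>LM\<^esub>i\<in>sect_supp n. (sect_gen n i \<otimes>\<^bsub>LR\<^esub> retr_coeff i m) \<odot>\<^bsub>LM\<^esub> G m) = sect_coeff n m \<odot>\<^bsub>LM\<^esub> G m"
      unfolding sect_coeff_def
      by (rule LMm.finsum_smult_rdistr[symmetric]) (use tv BI retr_coeff_closed G_in sect_supp_finite in auto)
  qed (use sect_coeff_closed G_in in \<open>auto intro!: LMm.smult_closed\<close>)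
  finally show ?thesis .
qed

lemma s_zero: "s \<zero>\<^bsub>LM\<^esub> = \<zero>\<^bsub>Y.FM\<^esub>"
  by (rule linear_map_zero[OF loc_module_module[OF M S] Y.FM_module s_lin])

lemma relation_sum: "finsum F (\<lambda>n. kg j n \<odot>\<^bsub>F\<^esub> g n) {..<L j} = \<zero>\<^bsub>F\<^esub>"
proof -
  have kFR: "kg j \<in> carrier RL.FR.FM" and ev: "eval_map R F g (kg j) = \<zero>\<^bsub>F\<^esub>"
    using kg_in_RelM[of j] by (simp_all add: RL.RelM_carrier)
  have "eval_map R F g (kg j) = finsum F (\<lambda>n. kg j n \<odot>\<^bsub>F\<^esub> g n) {..<L j}"
    by (rule RL.eval_map_sum[OF kFR]) (use kg_beyond not_le in auto)
  then show ?thesis using ev by simp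
qed

lemma sect_gen_relation: "finsum Y.FM (\<lambda>n. clsR (kg j n) \<one> \<odot>\<^bsub>Y.FM\<^esub> sect_gen n) {..<L j} = \<zero>\<^bsub>Y.FM\<^esub>"
proof -
  have kc: "\<And>n. clsR (kg j n) \<one> \<in> carrier LR" by (rule clsR_in[OF kg_closed one_S])
  have "finsum Y.FM (\<lambda>n. clsR (kg j n) \<one> \<odot>\<^bsub>Y.FM\<^esub> sect_gen n) {..<L j}
      = finsum Y.FM (\<lambda>n. s (clsR (kg j n) \<one> \<odot>\<^bsub>LM\<^esub> G n)) {..<L j}"
    by (rule Y.F.finsum_cong') (use kc G_in in \<open>auto simp: sect_gen_def linear_map_smult[OF s_lin] intro!: linear_map_closed[OF s_lin] LMm.smult_closed\<close>)
  also have "\<dots> = s (finsum LM (\<lambda>n. clsR (kg j n) \<one> \<odot>\<^bsub>LM\<^esub> G n) {..<L j})"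
    by (rule linear_map_finsum[OF loc_module_module[OF M S] Y.FM_module s_lin, symmetric])
       (use kc G_in in \<open>auto intro!: LMm.smult_closed\<close>)
  also have "finsum LM (\<lambda>n. clsR (kg j n) \<one> \<odot>\<^bsub>LM\<^esub> G n) {..<L j} = finsum LM (\<lambda>n. cls (kg j n \<odot>\<^bsub>F\<^esub> g n) \<one>) {..<L j}"
    by (rule LA.finsum_cong')
       (auto simp: G_def cls_smult[OF kg_closed g_car one_S one_S] intro!: cls_in g_car kg_closed one_S)
  also have "\<dots> = cls (finsum F (\<lambda>n. kg j n \<odot>\<^bsub>F\<^esub> g n) {..<L j}) \<one>"
    by (rule cls_one_finsum) (auto intro!: g_car kg_closed)
  also have "\<dots> = \<zero>\<^bsub>LM\<^esub>" using relation_sum cls_zero[OF one_S] by simp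
  finally show ?thesis using s_zero by simp
qed

lemma sect_gen_relation_coord:
  assumes i: "i \<in> I"
  shows "(\<Oplus>\<^bsub>LR\<^esub>n\<in>{..<L j}. clsR (kg j n) \<one> \<otimes>\<^bsub>LR\<^esub> sect_gen n i) = \<zero>\<^bsub>LR\<^esub>"
proof -
  have kc: "\<And>n. clsR (kg j n) \<one> \<in> carrier LR" by (rule clsR_in[OF kg_closed one_S])
  have cl: "(\<lambda>n. clsR (kg j n) \<one> \<odot>\<^bsub>Y.FM\<^esub> sect_gen n) \<in> {..<L j} \<rightarrow> carrier Y.FM"
    using kc sect_gen_closed by (auto intro!: Y.FM_smult_closed)
  have "(\<Oplus>\<^bsub>LR\<^esub>n\<in>{..<L j}. clsR (kg j n) \<one> \<otimes>\<^bsub>LR\<^esub> sect_gen n i)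
      = (\<Oplus>\<^bsub>LR\<^esub>n\<in>{..<L j}. (clsR (kg j n) \<one> \<odot>\<^bsub>Y.FM\<^esub> sect_gen n) i)"
    by (rule LR.finsum_cong') (use i kc Y.FM_val'[OF sect_gen_closed] in \<open>auto simp: Y.FM_simps\<close>)
  also have "\<dots> = finsum Y.FM (\<lambda>n. clsR (kg j n) \<one> \<odot>\<^bsub>Y.FM\<^esub> sect_gen n) {..<L j} i"
    using Y.FM_finsum[OF _ cl] i by simp
  also have "\<dots> = \<zero>\<^bsub>LR\<^esub>" using sect_gen_relation by (simp add: Y.FM_simps)
  finally show ?thesis .
qed

lemma sect_coeff_relation: "finsum LR (\<lambda>n. clsR (kg j n) \<one> \<otimes>\<^bsub>LR\<^esub> sect_coeff n m) {..<L j} = \<zero>\<^bsub>LR\<^esub>"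
proof -
  define BB where "BB = (\<Union>n\<in>{..<L j}. sect_supp n)"
  have BBf: "finite BB" unfolding BB_def using sect_supp_finite by auto
  have BBI: "BB \<subseteq> I" unfolding BB_def sect_supp_def by auto
  have tv: "\<And>n i. sect_gen n i \<in> carrier LR" by (rule Y.FM_val'[OF sect_gen_closed])
  have kc: "\<And>n. clsR (kg j n) \<one> \<in> carrier LR" by (rule clsR_in[OF kg_closed one_S])
  have gv: "\<And>i m. i \<in> BB \<Longrightarrow> retr_coeff i m \<in> carrier LR" using retr_coeff_closed BBI by auto
  have "finsum LR (\<lambda>n. clsR (kg j n) \<one> \<otimes>\<^bsub>LR\<^esub> sect_coeff n m) {..<L j}
      = (\<Oplus>\<^bsub>LR\<^esub>n\<in>{..<L j}. \<Oplus>\<^bsub>LR\<^esub>i\<in>BB. (clsR (kg j n) \<one> \<otimes>\<^bsub>LR\<^esub> sect_gen n i) \<otimes>\<^bsub>LR\<^esub> retr_coeff i m)"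
  proof (rule LR.finsum_cong')
    fix n assume n: "n \<in> {..<L j}"
    have "sect_coeff n m = finsum LR (\<lambda>i. sect_gen n i \<otimes>\<^bsub>LR\<^esub> retr_coeff i m) BB"
      by (rule sect_coeff_extend[OF BBf _ BBI]) (use n in \<open>auto simp: BB_def\<close>)
    then have "clsR (kg j n) \<one> \<otimes>\<^bsub>LR\<^esub> sect_coeff n m = (\<Oplus>\<^bsub>LR\<^esub>i\<in>BB. clsR (kg j n) \<one> \<otimes>\<^bsub>LR\<^esub> (sect_gen n i \<otimes>\<^bsub>LR\<^esub> retr_coeff i m))"
      using LR.finsum_rdistr[OF BBf kc, of "\<lambda>i. sect_gen n i \<otimes>\<^bsub>LR\<^esub> retr_coeff i m"] tv gv
      by (simp add: Pi_def)
    also have "\<dots> = (\<Oplus>\<^bsub>LR\<^esub>i\<in>BB. (clsR (kg j n) \<one> \<otimes>\<^bsub>LR\<^esub> sect_gen n i) \<otimes>\<^bsub>LR\<^esub> retr_coeff i m)"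
      by (rule LR.finsum_cong') (use kc tv gv in \<open>auto simp: LR.m_assoc\<close>)
    finally show "clsR (kg j n) \<one> \<otimes>\<^bsub>LR\<^esub> sect_coeff n m = (\<Oplus>\<^bsub>LR\<^esub>i\<in>BB. (clsR (kg j n) \<one> \<otimes>\<^bsub>LR\<^esub> sect_gen n i) \<otimes>\<^bsub>LR\<^esub> retr_coeff i m)" .
  qed (use kc tv gv in \<open>auto intro!: LR.finsum_closed\<close>)
  also have "\<dots> = (\<Oplus>\<^bsub>LR\<^esub>i\<in>BB. \<Oplus>\<^bsub>LR\<^esub>n\<in>{..<L j}. (clsR (kg j n) \<one> \<otimes>\<^bsub>LR\<^esub> sect_gen n i) \<otimes>\<^bsub>LR\<^esub> retr_coeff i m)"
    by (rule LR.finsum_swap) (use kc tv gv BBf in auto)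
  also have "\<dots> = (\<Oplus>\<^bsub>LR\<^esub>i\<in>BB. \<zero>\<^bsub>LR\<^esub>)"
  proof (rule LR.finsum_cong')
    fix i assume i: "i \<in> BB"
    then have iI: "i \<in> I" using BBI by auto
    have "(\<Oplus>\<^bsub>LR\<^esub>n\<in>{..<L j}. (clsR (kg j n) \<one> \<otimes>\<^bsub>LR\<^esub> sect_gen n i) \<otimes>\<^bsub>LR\<^esub> retr_coeff i m)
        = (\<Oplus>\<^bsub>LR\<^esub>n\<in>{..<L j}. clsR (kg j n) \<one> \<otimes>\<^bsub>LR\<^esub> sect_gen n i) \<otimes>\<^bsub>LR\<^esub> retr_coeff i m"
      by (rule LR.finsum_ldistr[symmetric]) (use kc tv gv i in auto)
    also have "(\<Oplus>\<^bsub>LR\<^esub>n\<in>{..<L j}. clsR (kg j n) \<one> \<otimes>\<^bsub>LR\<^esub> sect_gen n i) = \<zero>\<^bsub>LR\<^esub>"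
      by (rule sect_gen_relation_coord[OF iI])
    finally show "(\<Oplus>\<^bsub>LR\<^esub>n\<in>{..<L j}. (clsR (kg j n) \<one> \<otimes>\<^bsub>LR\<^esub> sect_gen n i) \<otimes>\<^bsub>LR\<^esub> retr_coeff i m) = \<zero>\<^bsub>LR\<^esub>"
      using gv[OF i] by simp
  qed auto
  also have "\<dots> = \<zero>\<^bsub>LR\<^esub>" by simp
  finally show ?thesis .
qed

definition sect_coeff_choice where "sect_coeff_choice n m = (SOME q. fst q \<in> carrier R \<and> snd q \<in> S \<and> sect_coeff n m = clsR (fst q) (snd q))"
definition coeff_num where "coeff_num n m = (if m < sect_len n then fst (sect_coeff_choice n m) else \<zero>)"
definition coeff_den where "coeff_den n m = (if m < sect_len n then snd (sect_coeff_choice n m) else \<one>)"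

lemma sect_coeff_choice_prop: "fst (sect_coeff_choice n m) \<in> carrier R \<and> snd (sect_coeff_choice n m) \<in> S \<and> sect_coeff n m = clsR (fst (sect_coeff_choice n m)) (snd (sect_coeff_choice n m))"
proof -
  obtain a r where "a \<in> carrier R" "r \<in> S" "sect_coeff n m = clsR a r" using sect_coeff_closed by (rule LR_cases)
  then have "\<exists>q. fst q \<in> carrier R \<and> snd q \<in> S \<and> sect_coeff n m = clsR (fst q) (snd q)"
    by (intro exI[of _ "(a, r)"]) auto
  then show ?thesis unfolding sect_coeff_choice_def by (rule someI_ex)
qed

lemma coeff_num_closed: "coeff_num n m \<in> carrier R" using sect_coeff_choice_prop by (simp add: coeff_num_def)
lemma coeff_den_S: "coeff_den n m \<in> S" using sect_coeff_choice_prop one_S by (simp add: coeff_den_def)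
lemma coeff_num_beyond: "sect_len n \<le> m \<Longrightarrow> coeff_num n m = \<zero>" by (simp add: coeff_num_def)
lemma sect_coeff_frac: "sect_coeff n m = clsR (coeff_num n m) (coeff_den n m)"
proof (cases "m < sect_len n")
  case True then show ?thesis using sect_coeff_choice_prop by (simp add: coeff_num_def coeff_den_def)
next
  case False then show ?thesis using sect_coeff_beyond[of n m] clsR_zero[OF one_S] by (simp add: coeff_num_def coeff_den_def)
qed

lemma retract_gen_fracs: "finsum LM (\<lambda>m. cls (coeff_num n m \<odot>\<^bsub>F\<^esub> g m) (coeff_den n m)) {..<sect_len n} = cls (g n) \<one>"
proof -
  have "finsum LM (\<lambda>m. cls (coeff_num n m \<odot>\<^bsub>F\<^esub> g m) (coeff_den n m)) {..<sect_len n} = finsum LM (\<lambda>m. sect_coeff n m \<odot>\<^bsub>LM\<^esub> G m) {..<sect_len n}"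
    by (rule LA.finsum_cong')
       (auto simp: sect_coeff_frac G_def cls_smult[OF coeff_num_closed g_car coeff_den_S one_S] S_car[OF coeff_den_S]
             intro!: LMm.smult_closed sect_coeff_closed G_in[unfolded G_def] cls_in smult_closed coeff_num_closed g_car coeff_den_S)
  also have "\<dots> = G n" by (rule G_expansion[symmetric])
  finally show ?thesis by (simp add: G_def)
qed

lemma relation_fracs: "finsum LR (\<lambda>n. clsR (kg j n \<otimes> coeff_num n m) (coeff_den n m)) {..<L j} = \<zero>\<^bsub>LR\<^esub>"
proof -
  have "finsum LR (\<lambda>n. clsR (kg j n \<otimes> coeff_num n m) (coeff_den n m)) {..<L j}
      = finsum LR (\<lambda>n. clsR (kg j n) \<one> \<otimes>\<^bsub>LR\<^esub> sect_coeff n m) {..<L j}"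
    by (rule LR.finsum_cong')
       (auto simp: sect_coeff_frac LR_mult[OF kg_closed coeff_num_closed one_S coeff_den_S] S_car[OF coeff_den_S] intro!: LR.m_closed clsR_in kg_closed one_S sect_coeff_closed[unfolded sect_coeff_frac] coeff_num_closed coeff_den_S)
  also have "\<dots> = \<zero>\<^bsub>LR\<^esub>" by (rule sect_coeff_relation)
  finally show ?thesis .
qed

lemma splitting: "loc_splitting R S F g kg L sect_len coeff_num coeff_den"
  by (rule loc_splitting.intro[OF loc_presentation.intro[OF localization_axioms
        loc_presentation_axioms.intro[OF gen kgen kg_beyond]]
        loc_splitting_axioms.intro[OF coeff_num_closed coeff_den_S coeff_num_beyond
        retract_gen_fracs relation_fracs]])

end

lemma projective_loc_splitting:
  assumes "module R M" "mult_subset R S" "generated_by R M g"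
    "generated_by R (relation_module R M g) kg" "\<And>j n. L j \<le> n \<Longrightarrow> kg j n = \<zero>\<^bsub>R\<^esub>"
    "projective (loc_ring R S) (loc_module R S M)"
  obtains K a d where "loc_splitting R S M g kg L K a d"
proof -
  obtain I :: "('b \<times> 'a) set set" and s p
    where "linear_map (loc_ring R S) (loc_module R S M) (free_module (loc_ring R S) I) s"
      "linear_map (loc_ring R S) (free_module (loc_ring R S) I) (loc_module R S M) p"
      "\<And>x. x \<in> carrier (loc_module R S M) \<Longrightarrow> p (s x) = x"
    using assms(6) unfolding projective_def by (elim conjE exE) blast
  then interpret loc_section R S M g kg L I s p
    by (intro loc_section.intro loc_presentation.intro localization.intro
        loc_presentation_axioms.intro loc_section_axioms.intro assms(1-5)) simp_all
  show thesis by (rule that[OF splitting])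
qed

section \<open>Countable descent\<close>

lemma loc_cls_finsum_eq_descends:
  fixes d :: "nat \<Rightarrow> 'a" and x :: "nat \<Rightarrow> 'b"
  assumes M: "module R M" and T: "mult_subset R T"
    and d: "\<And>m. d m \<in> T" and x: "\<And>m. x m \<in> carrier M" and y: "y \<in> carrier M"
    and eq: "finsum (loc_module R T M) (\<lambda>m. loc_cls R T M (x m) (d m)) {..<k} = loc_cls R T M y \<one>\<^bsub>R\<^esub>"
  shows "\<exists>u\<in>T. \<forall>S. mult_subset R S \<longrightarrow> (\<forall>m. d m \<in> S) \<longrightarrow> u \<in> S \<longrightarrow>
           finsum (loc_module R S M) (\<lambda>m. loc_cls R S M (x m) (d m)) {..<k} = loc_cls R S M y \<one>\<^bsub>R\<^esub>"
proof -
  interpret T: localization R T M by (rule localization.intro[OF M T])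
  let ?n = "frac_sum_num R M x d k" and ?e = "frac_sum_den R d k"
  have "T.cls ?n ?e = T.cls y \<one>\<^bsub>R\<^esub>" using eq unfolding T.cls_finsum[OF d x] .
  then have "T.rel ?n ?e y \<one>\<^bsub>R\<^esub>"
    by (rule T.cls_eq_iff[OF T.frac_sum_num_closed[OF d x] y T.frac_sum_den_S[OF d] T.one_S, THEN iffD1])
  then obtain u where u: "u \<in> T" "(u \<otimes>\<^bsub>R\<^esub> \<one>\<^bsub>R\<^esub>) \<odot>\<^bsub>M\<^esub> ?n = (u \<otimes>\<^bsub>R\<^esub> ?e) \<odot>\<^bsub>M\<^esub> y"
    unfolding T.rel_def by blast
  show ?thesis
  proof (intro bexI[OF _ u(1)] allI impI)
    fix S assume S: "mult_subset R S" and dS: "\<forall>m. d m \<in> S" and uS: "u \<in> S"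
    interpret S: localization R S M by (rule localization.intro[OF M S])
    have dS': "d m \<in> S" for m using dS by blast
    have "S.rel ?n ?e y \<one>\<^bsub>R\<^esub>" unfolding S.rel_def using u(2) uS by blast
    then have "S.cls ?n ?e = S.cls y \<one>\<^bsub>R\<^esub>"
      by (rule S.cls_eq_iff[OF S.frac_sum_num_closed[OF dS' x] y S.frac_sum_den_S[OF dS'] S.one_S, THEN iffD2])
    then show "finsum (loc_module R S M) (\<lambda>m. loc_cls R S M (x m) (d m)) {..<k} = loc_cls R S M y \<one>\<^bsub>R\<^esub>"
      unfolding S.cls_finsum[OF dS' x] .
  qed
qed

lemma loc_ring_finsum_eq_zero_descends:
  fixes d x :: "nat \<Rightarrow> 'a"
  assumes R: "cring R" and T: "mult_subset R T"
    and d: "\<And>m. d m \<in> T" and x: "\<And>m. x m \<in> carrier R"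
    and eq: "finsum (loc_ring R T) (\<lambda>m. loc_cls R T (ring_as_module R) (x m) (d m)) {..<k} = \<zero>\<^bsub>loc_ring R T\<^esub>"
  shows "\<exists>u\<in>T. \<forall>S. mult_subset R S \<longrightarrow> (\<forall>m. d m \<in> S) \<longrightarrow> u \<in> S \<longrightarrow>
           finsum (loc_ring R S) (\<lambda>m. loc_cls R S (ring_as_module R) (x m) (d m)) {..<k} = \<zero>\<^bsub>loc_ring R S\<^esub>"
proof -
  have ring_sums: "finsum (loc_ring R S) = finsum (loc_module R S (ring_as_module R))"
    "\<zero>\<^bsub>loc_ring R S\<^esub> = loc_cls R S (ring_as_module R) \<zero>\<^bsub>R\<^esub> \<one>\<^bsub>R\<^esub>" if "mult_subset R S" for S
  proof -
    interpret localization R S "ring_as_module R"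
      by (rule localization.intro[OF ring_as_module_module[OF R] that])
    show "finsum (loc_ring R S) = finsum (loc_module R S (ring_as_module R))" by (rule finsum_LR)
    show "\<zero>\<^bsub>loc_ring R S\<^esub> = loc_cls R S (ring_as_module R) \<zero>\<^bsub>R\<^esub> \<one>\<^bsub>R\<^esub>" by (rule LR_zero)
  qed
  have x': "x m \<in> carrier (ring_as_module R)" for m using x by simp
  have zero: "\<zero>\<^bsub>R\<^esub> \<in> carrier (ring_as_module R)"
    using R by (simp add: cring.axioms(1) ring.ring_simprules(2))
  have "finsum (loc_module R T (ring_as_module R)) (\<lambda>m. loc_cls R T (ring_as_module R) (x m) (d m)) {..<k}
      = loc_cls R T (ring_as_module R) \<zero>\<^bsub>R\<^esub> \<one>\<^bsub>R\<^esub>"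
    using eq unfolding ring_sums[OF T] .
  from loc_cls_finsum_eq_descends[OF ring_as_module_module[OF R] T d x' zero this]
  show ?thesis
  proof (elim bexE)
    fix u assume "u \<in> T" and descends: "\<forall>S. mult_subset R S \<longrightarrow> (\<forall>m. d m \<in> S) \<longrightarrow> u \<in> S \<longrightarrow>
      finsum (loc_module R S (ring_as_module R)) (\<lambda>m. loc_cls R S (ring_as_module R) (x m) (d m)) {..<k}
        = loc_cls R S (ring_as_module R) \<zero>\<^bsub>R\<^esub> \<one>\<^bsub>R\<^esub>"
    show ?thesis
    proof (intro bexI[OF _ \<open>u \<in> T\<close>] allI impI)
      fix S assume S: "mult_subset R S" and dS: "\<forall>m. d m \<in> S" and uS: "u \<in> S"
      show "finsum (loc_ring R S) (\<lambda>m. loc_cls R S (ring_as_module R) (x m) (d m)) {..<k}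
          = \<zero>\<^bsub>loc_ring R S\<^esub>"
        unfolding ring_sums[OF S] by (rule descends[rule_format, OF S dS[rule_format] uS])
    qed
  qed
qed

definition mult_closure :: "('a, 'm) monoid_scheme \<Rightarrow> 'a set \<Rightarrow> 'a set" where
  "mult_closure R W = (\<lambda>xs. foldr (\<otimes>\<^bsub>R\<^esub>) xs \<one>\<^bsub>R\<^esub>) ` lists W"

lemma countable_mult_closure: "countable W \<Longrightarrow> countable (mult_closure R W)"
  unfolding mult_closure_def by (intro countable_image countable_lists)

lemma mult_closure_subset:
  assumes T: "mult_subset R T" and W: "W \<subseteq> T"
  shows "mult_closure R W \<subseteq> T"
proof -
  have "foldr (\<otimes>\<^bsub>R\<^esub>) xs \<one>\<^bsub>R\<^esub> \<in> T" if "set xs \<subseteq> T" for xs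
    using that T unfolding mult_subset_def by (induction xs) auto
  then show ?thesis using W unfolding mult_closure_def by auto
qed

lemma (in monoid) mult_closure_superset: "W \<subseteq> carrier G \<Longrightarrow> W \<subseteq> mult_closure G W"
proof
  fix w assume "W \<subseteq> carrier G" "w \<in> W"
  then have "w = foldr (\<otimes>) [w] \<one>" and "[w] \<in> lists W" by auto
  then show "w \<in> mult_closure G W" unfolding mult_closure_def by blast
qed

lemma mult_subset_mult_closure:
  fixes R :: "'a ring" (structure)
  assumes "monoid R" and W: "W \<subseteq> carrier R"
  shows "mult_subset R (mult_closure R W)"
proof -
  interpret monoid R by fact
  let ?prod = "\<lambda>xs. foldr (\<otimes>) xs \<one>"
  have closed: "set xs \<subseteq> carrier R \<Longrightarrow> ?prod xs \<in> carrier R" for xs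
    by (induction xs) auto
  have append: "set xs \<subseteq> carrier R \<Longrightarrow> set ys \<subseteq> carrier R \<Longrightarrow> ?prod (xs @ ys) = ?prod xs \<otimes> ?prod ys"
    for xs ys by (induction xs) (auto simp: m_assoc closed)
  show ?thesis
    unfolding mult_subset_def mult_closure_def
  proof (intro conjI ballI)
    show "?prod ` lists W \<subseteq> carrier R" using closed W by auto
    show "\<one> \<in> ?prod ` lists W" by (rule image_eqI[where x = "[]"]) auto
  next
    fix x y assume "x \<in> ?prod ` lists W" "y \<in> ?prod ` lists W"
    then obtain xs ys where xs: "xs \<in> lists W" "x = ?prod xs" and ys: "ys \<in> lists W" "y = ?prod ys"
      by blast
    have "?prod (xs @ ys) = x \<otimes> y"
      unfolding xs(2) ys(2) by (rule append) (use xs(1) ys(1) W in auto)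
    moreover have "xs @ ys \<in> lists W" using xs(1) ys(1) by simp
    ultimately show "x \<otimes> y \<in> ?prod ` lists W" by (rule image_eqI[OF sym])
  qed
qed

lemma (in loc_splitting) retract_gen_witnesses:
  obtains u where "\<And>n. u n \<in> S"
    "\<And>n S'. mult_subset R S' \<Longrightarrow> \<forall>m. d n m \<in> S' \<Longrightarrow> u n \<in> S' \<Longrightarrow>
      finsum (loc_module R S' F) (\<lambda>m. loc_cls R S' F (a n m \<odot>\<^bsub>F\<^esub> g m) (d n m)) {..<K n}
        = loc_cls R S' F (g n) \<one>"
proof -
  define descends where "descends n u \<longleftrightarrow>
    (\<forall>S'. mult_subset R S' \<longrightarrow> (\<forall>m. d n m \<in> S') \<longrightarrow> u \<in> S' \<longrightarrow>
      finsum (loc_module R S' F) (\<lambda>m. loc_cls R S' F (a n m \<odot>\<^bsub>F\<^esub> g m) (d n m)) {..<K n}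
        = loc_cls R S' F (g n) \<one>)" for n u
  have "\<exists>u\<in>S. descends n u" for n
    unfolding descends_def
    by (rule loc_cls_finsum_eq_descends[OF M S d_S _ g_car retract_gen])
       (rule smult_closed[OF a_car g_car])
  then have "\<forall>n. \<exists>u. u \<in> S \<and> descends n u" by blast
  then obtain u where "\<forall>n. u n \<in> S \<and> descends n (u n)" by (rule choice[THEN exE])
  then show thesis unfolding descends_def by (intro that[of u]) simp_all
qed

lemma (in loc_splitting) relations_vanish_witnesses:
  obtains u where "\<And>j m. u j m \<in> S"
    "\<And>j m S'. mult_subset R S' \<Longrightarrow> \<forall>n. d n m \<in> S' \<Longrightarrow> u j m \<in> S' \<Longrightarrow>
      finsum (loc_ring R S') (\<lambda>n. loc_cls R S' (ring_as_module R) (kg j n \<otimes> a n m) (d n m)) {..<L j}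
        = \<zero>\<^bsub>loc_ring R S'\<^esub>"
proof -
  define descends where "descends j m u \<longleftrightarrow>
    (\<forall>S'. mult_subset R S' \<longrightarrow> (\<forall>n. d n m \<in> S') \<longrightarrow> u \<in> S' \<longrightarrow>
      finsum (loc_ring R S') (\<lambda>n. loc_cls R S' (ring_as_module R) (kg j n \<otimes> a n m) (d n m)) {..<L j}
        = \<zero>\<^bsub>loc_ring R S'\<^esub>)" for j m u
  have "\<exists>u\<in>S. descends j m u" for j m
    unfolding descends_def
    by (rule loc_ring_finsum_eq_zero_descends[OF is_cring S d_S _ relations_vanish])
       (rule m_closed[OF kg_closed a_car])
  then have "\<forall>j. \<forall>m. \<exists>u. u \<in> S \<and> descends j m u" by blast
  then have "\<forall>j. \<exists>f. \<forall>m. f m \<in> S \<and> descends j m (f m)" by (intro allI choice) blast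
  then obtain u where "\<forall>j m. u j m \<in> S \<and> descends j m (u j m)" by (rule choice[THEN exE])
  then show thesis unfolding descends_def by (intro that[of u]) simp_all
qed

lemma (in loc_splitting) countable_witnesses:
  obtains W where "W \<subseteq> S" "countable W"
    "\<And>S'. mult_subset R S' \<Longrightarrow> W \<subseteq> S' \<Longrightarrow> loc_splitting R S' F g kg L K a d"
proof -
  obtain uP where uP: "\<And>n. uP n \<in> S"
    "\<And>n S'. mult_subset R S' \<Longrightarrow> \<forall>m. d n m \<in> S' \<Longrightarrow> uP n \<in> S' \<Longrightarrow>
      finsum (loc_module R S' F) (\<lambda>m. loc_cls R S' F (a n m \<odot>\<^bsub>F\<^esub> g m) (d n m)) {..<K n}
        = loc_cls R S' F (g n) \<one>"
    using retract_gen_witnesses by blast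
  obtain uZ where uZ: "\<And>j m. uZ j m \<in> S"
    "\<And>j m S'. mult_subset R S' \<Longrightarrow> \<forall>n. d n m \<in> S' \<Longrightarrow> uZ j m \<in> S' \<Longrightarrow>
      finsum (loc_ring R S') (\<lambda>n. loc_cls R S' (ring_as_module R) (kg j n \<otimes> a n m) (d n m)) {..<L j}
        = \<zero>\<^bsub>loc_ring R S'\<^esub>"
    using relations_vanish_witnesses by blast
  define W where "W = range (case_prod d) \<union> range uP \<union> range (case_prod uZ)"
  have "W \<subseteq> S" unfolding W_def using d_S uP(1) uZ(1) by auto
  moreover have "countable W" unfolding W_def by auto
  moreover have "loc_splitting R S' F g kg L K a d" if S': "mult_subset R S'" and WS': "W \<subseteq> S'" for S'
  proof -
    have dS': "d n m \<in> S'" for n m using WS' unfolding W_def by auto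
    have "uP n \<in> W" "case_prod uZ (j, m) \<in> W" for n j m unfolding W_def by blast+
    then have "uP n \<in> S'" "uZ j m \<in> S'" for n j m using WS' by auto
    with S' dS' show ?thesis
      by (intro loc_splitting.intro[OF loc_presentation.intro[OF localization.intro[OF M S']
          loc_presentation_axioms.intro[OF gen kgen kg_beyond]]] loc_splitting_axioms.intro
          a_car dS' a_out uP(2) uZ(2)) simp_all
  qed
  ultimately show thesis by (rule that)
qed

lemma loc_splitting_countable_descent:
  assumes "loc_splitting R T F g kg L K a d"
  obtains S where "S \<subseteq> T" "countable S" "mult_subset R S" "loc_splitting R S F g kg L K a d"
proof -
  interpret T: loc_splitting R T F g kg L K a d by fact
  obtain W where W: "W \<subseteq> T" "countable W"
    and splits: "\<And>S. mult_subset R S \<Longrightarrow> W \<subseteq> S \<Longrightarrow> loc_splitting R S F g kg L K a d"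
    using T.countable_witnesses by blast
  define S where "S = mult_closure R W"
  have WR: "W \<subseteq> carrier R" using W(1) T.S_car by auto
  have S: "mult_subset R S" unfolding S_def by (rule mult_subset_mult_closure[OF T.monoid_axioms WR])
  show thesis
  proof (rule that)
    show "S \<subseteq> T" unfolding S_def by (rule mult_closure_subset[OF T.S W(1)])
    show "countable S" unfolding S_def by (rule countable_mult_closure[OF W(2)])
    show "mult_subset R S" by (rule S)
    show "loc_splitting R S F g kg L K a d"
      by (rule splits[OF S]) (unfold S_def, rule T.mult_closure_superset[OF WR])
  qed
qed

theorem proposition2p2:
  fixes R :: "'a ring" and F :: "('a, 'b) module" and T :: "'a set"
  assumes "cring R"
    and "module R F"
    and "countably_presented R F"
    and "flat R F"
    and "mult_subset R T"
    and "projective (loc_ring R T) (loc_module R T F)"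
  shows "\<exists>S. S \<subseteq> T \<and> countable S \<and> mult_subset R S \<and>
             projective (loc_ring R S) (loc_module R S F)"
proof -
  obtain g where gen: "generated_by R F g" and "countably_generated R (relation_module R F g)"
    using assms(3) unfolding countably_presented_def by blast
  then obtain kg where kgen: "generated_by R (relation_module R F g) kg"
    unfolding countably_generated_def by blast
  interpret generated_module R F g
    by (intro generated_module.intro[OF assms(1)] generated_module_axioms.intro[OF assms(2)])
       (rule gen[unfolded generated_by_def, THEN conjunct1, THEN spec])
  obtain L where L: "\<And>j n. L j \<le> n \<Longrightarrow> kg j n = \<zero>\<^bsub>R\<^esub>"
    using relation_generators_bounded[OF kgen] by blast
  obtain K a d where "loc_splitting R T F g kg L K a d"
    using projective_loc_splitting[OF assms(2,5) gen kgen L assms(6)] by blast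
  then obtain S where "S \<subseteq> T" "countable S" "mult_subset R S"
    and "loc_splitting R S F g kg L K a d"
    by (rule loc_splitting_countable_descent)
  then show ?thesis using loc_splitting.projective_loc_module by (intro exI[of _ S]) simp
qed

end
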